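(* Let $R$ be a commutative domain of finite character with field of fractions $Q$, let $\Lambda$ be an $R$-algebra finitely generated as an $R$-module, and let $M,N,K$ be finitely generated right $\Lambda$-modules which are torsion-free as $R$-modules. Assume that $M_\mathfrak m$ is a direct summand of $N_\mathfrak m$ for every maximal ideal $\mathfrak m$ of $R$, and that $M\otimes_R Q$ is a direct summand of $K\otimes_R Q$ (as $\Lambda\otimes_R Q$-modules). Then $M$ is a direct summand of $N\oplus K$.
   Context: A commutative domain has finite character if every non-zero element lies in only finitely many maximal ideals. A module is torsion-free over $R$ if $M\to M\otimes_R Q$ is injective. *)

theory Defs
  imports Main
begin

definition r_ideal :: "'r::comm_ring_1 set \<Rightarrow> bool" where
  "r_ideal I \<longleftrightarrow> 0 \<in> I \<and> (\<forall>x\<in>I. \<forall>y\<in>I. x + y \<in> I) \<and> (\<forall>r. \<forall>x\<in>I. r * x \<in> I)"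

definition max_ideal :: "'r::comm_ring_1 set \<Rightarrow> bool" where
  "max_ideal I \<longleftrightarrow> r_ideal I \<and> I \<noteq> UNIV \<and>
     (\<forall>J. r_ideal J \<and> I \<subseteq> J \<longrightarrow> J = I \<or> J = UNIV)"

definition finite_character :: "'r::idom itself \<Rightarrow> bool" where
  "finite_character _ \<longleftrightarrow> (\<forall>r::'r. r \<noteq> 0 \<longrightarrow> finite {m. max_ideal m \<and> r \<in> m})"

definition is_algebra_map :: "('r::comm_ring_1 \<Rightarrow> 'a::ring_1) \<Rightarrow> bool" where
  "is_algebra_map \<phi> \<longleftrightarrow> \<phi> 1 = 1 \<and> (\<forall>r s. \<phi> (r + s) = \<phi> r + \<phi> s) \<and>
     (\<forall>r s. \<phi> (r * s) = \<phi> r * \<phi> s) \<and> (\<forall>r a. \<phi> r * a = a * \<phi> r)"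

definition fg_over_base :: "('r::comm_ring_1 \<Rightarrow> 'a::ring_1) \<Rightarrow> bool" where
  "fg_over_base \<phi> \<longleftrightarrow> (\<exists>G. finite G \<and> (\<forall>a. \<exists>c. a = (\<Sum>g\<in>G. \<phi> (c g) * g)))"

definition right_module :: "('m::ab_group_add \<Rightarrow> 'a::ring_1 \<Rightarrow> 'm) \<Rightarrow> bool" where
  "right_module act \<longleftrightarrow> (\<forall>x. act x 1 = x) \<and> (\<forall>x a b. act x (a * b) = act (act x a) b) \<and>
     (\<forall>x y a. act (x + y) a = act x a + act y a) \<and> (\<forall>x a b. act x (a + b) = act x a + act x b)"

definition fg_right_module :: "('m::ab_group_add \<Rightarrow> 'a::ring_1 \<Rightarrow> 'm) \<Rightarrow> bool" where
  "fg_right_module act \<longleftrightarrow> (\<exists>G. finite G \<and> (\<forall>x. \<exists>c. x = (\<Sum>g\<in>G. act g (c g))))"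

text \<open>\<open>sm\<close> is the R-scalar multiplication (x, r) \<mapsto> x r. S^-1 M is the set of classes of pairs (x, s).\<close>

definition loc_rel :: "('m::ab_group_add \<Rightarrow> 'r::comm_ring_1 \<Rightarrow> 'm) \<Rightarrow> 'r set \<Rightarrow> (('m \<times> 'r) \<times> ('m \<times> 'r)) set" where
  "loc_rel sm S = {((x, s), (y, t)). s \<in> S \<and> t \<in> S \<and> (\<exists>u\<in>S. sm (sm x t - sm y s) u = 0)}"

definition loc :: "('m::ab_group_add \<Rightarrow> 'r::comm_ring_1 \<Rightarrow> 'm) \<Rightarrow> 'r set \<Rightarrow> ('m \<times> 'r) set set" where
  "loc sm S = (UNIV \<times> S) // loc_rel sm S"

definition loc_class :: "('m::ab_group_add \<Rightarrow> 'r::comm_ring_1 \<Rightarrow> 'm) \<Rightarrow> 'r set \<Rightarrow> 'm \<Rightarrow> 'r \<Rightarrow> ('m \<times> 'r) set" where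
  "loc_class sm S x s = loc_rel sm S `` {(x, s)}"

definition loc_add :: "('m::ab_group_add \<Rightarrow> 'r::comm_ring_1 \<Rightarrow> 'm) \<Rightarrow> 'r set \<Rightarrow>
    ('m \<times> 'r) set \<Rightarrow> ('m \<times> 'r) set \<Rightarrow> ('m \<times> 'r) set" where
  "loc_add sm S X Y = (case (SOME p. p \<in> X, SOME q. q \<in> Y) of
      ((x, s), (y, t)) \<Rightarrow> loc_class sm S (sm x t + sm y s) (s * t))"

definition loc_act :: "('m::ab_group_add \<Rightarrow> 'r::comm_ring_1 \<Rightarrow> 'm) \<Rightarrow> 'r set \<Rightarrow> ('m \<Rightarrow> 'a \<Rightarrow> 'm) \<Rightarrow>
    ('m \<times> 'r) set \<Rightarrow> ('a \<times> 'r) set \<Rightarrow> ('m \<times> 'r) set" where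
  "loc_act sm S act X A = (case (SOME p. p \<in> X, SOME q. q \<in> A) of
      ((x, s), (a, t)) \<Rightarrow> loc_class sm S (act x a) (s * t))"

text \<open>Complement of a prime (maximal) ideal, and the non-zero elements (giving M tensor_R Q).\<close>
abbreviation nonzeros :: "'r::idom set" where "nonzeros \<equiv> UNIV - {0}"

text \<open>Torsion-free: the canonical map M \<rightarrow> M tensor_R Q = (R - 0)^-1 M, x \<mapsto> x/1, is injective.\<close>
definition torsion_free :: "('m::ab_group_add \<Rightarrow> 'r::idom \<Rightarrow> 'm) \<Rightarrow> bool" where
  "torsion_free sm \<longleftrightarrow> inj (\<lambda>x. loc_class sm nonzeros x 1)"

definition is_direct_summand ::
  "'x set \<Rightarrow> ('x \<Rightarrow> 'x \<Rightarrow> 'x) \<Rightarrow> ('x \<Rightarrow> 's \<Rightarrow> 'x) \<Rightarrow>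
   'y set \<Rightarrow> ('y \<Rightarrow> 'y \<Rightarrow> 'y) \<Rightarrow> ('y \<Rightarrow> 's \<Rightarrow> 'y) \<Rightarrow> 's set \<Rightarrow> bool" where
  "is_direct_summand CM addM actM CN addN actN Sc \<longleftrightarrow>
    (\<exists>f C. (\<forall>x\<in>CM. f x \<in> CN) \<and> inj_on f CM \<and>
       (\<forall>x\<in>CM. \<forall>y\<in>CM. f (addM x y) = addN (f x) (f y)) \<and>
       (\<forall>x\<in>CM. \<forall>a\<in>Sc. f (actM x a) = actN (f x) a) \<and>
       C \<subseteq> CN \<and> C \<noteq> {} \<and>
       (\<forall>x\<in>C. \<forall>y\<in>C. addN x y \<in> C) \<and> (\<forall>x\<in>C. \<forall>a\<in>Sc. actN x a \<in> C) \<and>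
       (\<forall>n\<in>CN. \<exists>!p. fst p \<in> f ` CM \<and> snd p \<in> C \<and> n = addN (fst p) (snd p)))"

definition loc_direct_summand ::
  "('r::comm_ring_1 \<Rightarrow> 'a::ring_1) \<Rightarrow> 'r set \<Rightarrow> ('m::ab_group_add \<Rightarrow> 'a \<Rightarrow> 'm) \<Rightarrow> ('n::ab_group_add \<Rightarrow> 'a \<Rightarrow> 'n) \<Rightarrow> bool" where
  "loc_direct_summand \<phi> S actM actN \<longleftrightarrow>
    (let smM = (\<lambda>x r. actM x (\<phi> r)); smN = (\<lambda>x r. actN x (\<phi> r)); smL = (\<lambda>a r. a * \<phi> r) in
     is_direct_summand (loc smM S) (loc_add smM S) (loc_act smM S actM)
                       (loc smN S) (loc_add smN S) (loc_act smN S actN) (loc smL S))"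

end

theory Submission
  imports Defs "Jordan_Normal_Form.Char_Poly" "HOL-Library.Product_Plus"
begin

(* Say that multiplication by u on M factors through N if there are \<Lambda>-maps f : M \<rightarrow> N and
   g : N \<rightarrow> M with g \<circ> f = u. Clearing denominators, the splitting of M\<^sub>m off N\<^sub>m gives such a
   factorisation with u \<notin> m, and the splitting of M \<otimes> Q off K \<otimes> Q one with some t \<noteq> 0 through K.
   Only the finitely many maximal ideals containing t matter. Combining their local maps with
   separating coefficients c\<^sub>m (c\<^sub>m \<notin> m, c\<^sub>m \<in> m' for m' \<noteq> m) yields an endomorphism y = \<delta> \<circ> \<gamma> of M
   which is congruent to a scalar outside m modulo each such m; the determinant trick then gives a
   polynomial q with y \<circ> q(y) = a, where a lies in none of them. So a and t are comaximal,
   a' a + t' t = 1, and multiplication by 1 factors through N \<oplus> K, i.e. M is a direct summand. *)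

section \<open>Ideals of a commutative ring\<close>

lemma r_ideal_zero: "r_ideal I \<Longrightarrow> 0 \<in> I"
  by (simp add: r_ideal_def)

lemma r_ideal_add: "r_ideal I \<Longrightarrow> x \<in> I \<Longrightarrow> y \<in> I \<Longrightarrow> x + y \<in> I"
  by (simp add: r_ideal_def)

lemma r_ideal_mult_left: "r_ideal I \<Longrightarrow> x \<in> I \<Longrightarrow> r * x \<in> I"
  by (simp add: r_ideal_def)

lemma r_ideal_mult_right: "r_ideal I \<Longrightarrow> x \<in> I \<Longrightarrow> x * r \<in> I"
  by (metis r_ideal_mult_left mult.commute)

lemma r_ideal_diff: "r_ideal I \<Longrightarrow> x \<in> I \<Longrightarrow> y \<in> I \<Longrightarrow> x - y \<in> I"
  using r_ideal_add[of I x "- 1 * y"] r_ideal_mult_left[of I y "- 1"] by simp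

lemma r_ideal_sum: "r_ideal I \<Longrightarrow> (\<And>i. i \<in> A \<Longrightarrow> f i \<in> I) \<Longrightarrow> sum f A \<in> I"
  by (induction A rule: infinite_finite_induct) (auto simp: r_ideal_zero r_ideal_add)

lemma r_ideal_eq_UNIV: "r_ideal I \<Longrightarrow> 1 \<in> I \<Longrightarrow> I = UNIV"
  using r_ideal_mult_left[of I 1] by auto

lemma r_ideal_prod_diff:
  assumes I: "r_ideal I" and fg: "\<And>i. i \<in> A \<Longrightarrow> f i - g i \<in> I"
  shows "prod f A - prod g A \<in> I"
  using fg
proof (induction A rule: infinite_finite_induct)
  case (insert x F)
  have "prod f (insert x F) - prod g (insert x F) = (f x - g x) * prod f F + g x * (prod f F - prod g F)"
    using insert.hyps by (simp add: algebra_simps)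
  moreover have "(f x - g x) * prod f F \<in> I"
    using insert.prems by (simp add: r_ideal_mult_right[OF I])
  moreover have "g x * (prod f F - prod g F) \<in> I"
    using insert by (simp add: r_ideal_mult_left[OF I])
  ultimately show ?case
    using r_ideal_add[OF I] by metis
qed (simp_all add: r_ideal_zero[OF I])

lemma det_diff_in_r_ideal:
  fixes A B :: "'r::comm_ring_1 mat"
  assumes I: "r_ideal I" and A: "A \<in> carrier_mat n n" and B: "B \<in> carrier_mat n n"
    and AB: "\<And>i j. i < n \<Longrightarrow> j < n \<Longrightarrow> A $$ (i, j) - B $$ (i, j) \<in> I"
  shows "det A - det B \<in> I"
proof -
  have "det A - det B = (\<Sum>p | p permutes {0..<n}. of_int (sign p) *
      ((\<Prod>i = 0..<n. A $$ (i, p i)) - (\<Prod>i = 0..<n. B $$ (i, p i))))"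
    unfolding det_def'[OF A] det_def'[OF B] by (simp add: sum_subtractf algebra_simps)
  also have "\<dots> \<in> I"
  proof (intro r_ideal_sum[OF I] r_ideal_mult_left[OF I] r_ideal_prod_diff[OF I])
    fix p i assume "p \<in> {p. p permutes {0..<n}}" "i \<in> {0..<n}"
    then show "A $$ (i, p i) - B $$ (i, p i) \<in> I"
      by (simp add: AB permutes_in_image)
  qed
  finally show ?thesis .
qed

lemma r_ideal_extend:
  assumes I: "r_ideal I"
  shows "r_ideal {x + r * a | x r. x \<in> I}"
  unfolding r_ideal_def
proof (intro conjI ballI allI)
  have "0 = 0 + 0 * a"
    by simp
  then show "0 \<in> {x + r * a | x r. x \<in> I}"
    using r_ideal_zero[OF I] by blast
next
  fix u v assume "u \<in> {x + r * a | x r. x \<in> I}" "v \<in> {x + r * a | x r. x \<in> I}"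
  then obtain x r x' r' where "u = x + r * a" "v = x' + r' * a" "x \<in> I" "x' \<in> I"
    by auto
  then have "u + v = (x + x') + (r + r') * a" "x + x' \<in> I"
    using r_ideal_add[OF I] by (auto simp: algebra_simps)
  then show "u + v \<in> {x + r * a | x r. x \<in> I}"
    by blast
next
  fix s u assume "u \<in> {x + r * a | x r. x \<in> I}"
  then obtain x r where "u = x + r * a" "x \<in> I"
    by auto
  moreover have "s * x \<in> I"
    using r_ideal_mult_left[OF I \<open>x \<in> I\<close>] .
  ultimately have "s * u = s * x + (s * r) * a" "s * x \<in> I"
    by (simp_all add: algebra_simps)
  then show "s * u \<in> {x + r * a | x r. x \<in> I}"
    by blast
qed

lemma r_ideal_Union_chain:
  assumes "C \<noteq> {}" and "\<And>J. J \<in> C \<Longrightarrow> r_ideal J" and "chain\<^sub>\<subseteq> C"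
  shows "r_ideal (\<Union>C)"
  unfolding r_ideal_def
proof (intro conjI ballI allI)
  show "0 \<in> \<Union>C"
    using assms(1,2) r_ideal_zero by blast
  fix x y assume "x \<in> \<Union>C" "y \<in> \<Union>C"
  then obtain J1 J2 where "x \<in> J1" "y \<in> J2" "J1 \<in> C" "J2 \<in> C"
    by auto
  with assms(2,3) show "x + y \<in> \<Union>C"
    unfolding chain_subset_def by (metis UnionI r_ideal_add subsetD)
next
  fix r x assume "x \<in> \<Union>C"
  with assms(2) show "r * x \<in> \<Union>C"
    using r_ideal_mult_left by blast
qed

lemma max_ideal_if_maximal_without_one:
  assumes m: "r_ideal m" "1 \<notin> m"
    and maximal: "\<And>J. r_ideal J \<Longrightarrow> 1 \<notin> J \<Longrightarrow> m \<subseteq> J \<Longrightarrow> J = m"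
  shows "max_ideal m"
  unfolding max_ideal_def
proof (intro conjI allI impI)
  show "r_ideal m" "m \<noteq> UNIV"
    using m by auto
  fix J assume J: "r_ideal J \<and> m \<subseteq> J"
  show "J = m \<or> J = UNIV"
    using J maximal r_ideal_eq_UNIV by (cases "1 \<in> J") auto
qed

lemma ex_max_ideal_superset:
  fixes I :: "'r::comm_ring_1 set"
  assumes I: "r_ideal I" and one: "1 \<notin> I"
  shows "\<exists>m. max_ideal m \<and> I \<subseteq> m"
proof -
  define A where "A = {J. r_ideal J \<and> I \<subseteq> J \<and> 1 \<notin> J}"
  have "\<forall>C\<in>chains A. \<exists>U\<in>A. \<forall>J\<in>C. J \<subseteq> U"
  proof
    fix C assume C: "C \<in> chains A"
    show "\<exists>U\<in>A. \<forall>J\<in>C. J \<subseteq> U"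
    proof (cases "C = {}")
      case True
      have "I \<in> A"
        using I one unfolding A_def by blast
      then show ?thesis
        using True by blast
    next
      case False
      have CA: "C \<subseteq> A" and "chain\<^sub>\<subseteq> C"
        using C by (auto simp: chains_def)
      then have "r_ideal (\<Union>C)"
        using False r_ideal_Union_chain[of C] unfolding A_def by blast
      moreover have "I \<subseteq> \<Union>C" "1 \<notin> \<Union>C"
        using False CA unfolding A_def by auto
      ultimately have "\<Union>C \<in> A"
        unfolding A_def by blast
      then show ?thesis
        by blast
    qed
  qed
  then obtain m where m: "m \<in> A" and m_max: "\<And>J. J \<in> A \<Longrightarrow> m \<subseteq> J \<Longrightarrow> J = m"
    by (metis Zorn_Lemma2)
  have "max_ideal m"
    using m m_max unfolding A_def by (intro max_ideal_if_maximal_without_one) auto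
  then show ?thesis
    using m unfolding A_def by blast
qed

definition prime_ideal :: "'r::comm_ring_1 set \<Rightarrow> bool" where
  "prime_ideal P \<longleftrightarrow> r_ideal P \<and> 1 \<notin> P \<and> (\<forall>a b. a * b \<in> P \<longrightarrow> a \<in> P \<or> b \<in> P)"

lemma prime_ideal_prod_notin:
  assumes P: "prime_ideal P" and f: "\<And>i. i \<in> A \<Longrightarrow> f i \<notin> P"
  shows "prod f A \<notin> P"
  using f by (induction A rule: infinite_finite_induct) (use P in \<open>auto simp: prime_ideal_def\<close>)

lemma prime_ideal_power_notin: "prime_ideal P \<Longrightarrow> s \<notin> P \<Longrightarrow> s ^ n \<notin> P"
  using prime_ideal_prod_notin[of P "{..<n}" "\<lambda>_. s"] by simp

lemma det_notin_prime_ideal: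
  fixes A :: "'r::comm_ring_1 mat"
  assumes P: "prime_ideal P" and A: "A \<in> carrier_mat n n" and s: "s \<notin> P"
    and As: "\<And>i j. i < n \<Longrightarrow> j < n \<Longrightarrow> A $$ (i, j) - (if i = j then s else 0) \<in> P"
  shows "det A \<notin> P"
proof
  assume "det A \<in> P"
  have I: "r_ideal P"
    using P by (simp add: prime_ideal_def)
  have "det A - det (s \<cdot>\<^sub>m 1\<^sub>m n) \<in> P"
  proof (rule det_diff_in_r_ideal[OF I A])
    fix i j assume ij: "i < n" "j < n"
    then show "A $$ (i, j) - (s \<cdot>\<^sub>m 1\<^sub>m n) $$ (i, j) \<in> P"
      using As[OF ij] by (cases "i = j") simp_all
  qed simp
  then have "s ^ n \<in> P"
    using r_ideal_diff[OF I \<open>det A \<in> P\<close>] by force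
  then show False
    using prime_ideal_power_notin[OF P s] by simp
qed

lemma max_ideal_imp_prime_ideal:
  assumes m: "max_ideal m"
  shows "prime_ideal m"
proof -
  have I: "r_ideal m" and one: "1 \<notin> m"
    using m r_ideal_eq_UNIV by (auto simp: max_ideal_def)
  have "a \<in> m \<or> b \<in> m" if ab: "a * b \<in> m" for a b
  proof (rule ccontr)
    assume "\<not> (a \<in> m \<or> b \<in> m)"
    define J where "J = {x + r * a | x r. x \<in> m}"
    have "m \<subseteq> J"
      unfolding J_def by (force intro: exI[of _ 0])
    moreover have "a \<in> J"
      unfolding J_def using r_ideal_zero[OF I] by (force intro: exI[of _ 1])
    ultimately have "J = UNIV"
      using m r_ideal_extend[OF I] \<open>\<not> (a \<in> m \<or> b \<in> m)\<close> unfolding max_ideal_def J_def by blast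
    then obtain x r where xr: "1 = x + r * a" "x \<in> m"
      unfolding J_def by blast
    then have "b = x * b + r * (a * b)"
      by (metis mult_1 distrib_right mult.assoc mult.commute)
    moreover have "x * b \<in> m" "r * (a * b) \<in> m"
      using xr(2) ab r_ideal_mult_right[OF I] r_ideal_mult_left[OF I] by auto
    ultimately show False
      using r_ideal_add[OF I] \<open>\<not> (a \<in> m \<or> b \<in> m)\<close> by metis
  qed
  then show ?thesis
    using I one by (simp add: prime_ideal_def)
qed

lemma ex_separating_element:
  fixes T :: "'r::comm_ring_1 set set"
  assumes T: "finite T" "\<And>m. m \<in> T \<Longrightarrow> max_ideal m" and m: "m \<in> T"
  shows "\<exists>c. c \<notin> m \<and> (\<forall>m'\<in>T - {m}. c \<in> m')"
proof -
  have "\<exists>e. e \<in> m' \<and> e \<notin> m" if m': "m' \<in> T - {m}" for m'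
  proof (rule ccontr)
    assume "\<not> ?thesis"
    then have "m' \<subseteq> m"
      by blast
    moreover have "r_ideal m" "m \<noteq> UNIV"
      using T(2)[OF m] by (auto simp: max_ideal_def)
    ultimately show False
      using T(2)[of m'] m' unfolding max_ideal_def by blast
  qed
  then obtain e where e: "\<And>m'. m' \<in> T - {m} \<Longrightarrow> e m' \<in> m' \<and> e m' \<notin> m"
    by metis
  have "prod e (T - {m}) \<notin> m"
    using e by (intro prime_ideal_prod_notin max_ideal_imp_prime_ideal T(2)[OF m]) blast
  moreover have "prod e (T - {m}) \<in> m'" if m': "m' \<in> T - {m}" for m'
  proof -
    have "r_ideal m'"
      using T(2) m' by (simp add: max_ideal_def)
    moreover have "prod e (T - {m}) = e m' * prod e (T - {m} - {m'})"
      using T(1) m' by (simp add: prod.remove)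
    ultimately show ?thesis
      using e[OF m'] r_ideal_mult_right by metis
  qed
  ultimately show ?thesis
    by blast
qed

lemma separating_squares_sum_notin:
  assumes T: "finite T" and m: "m \<in> T" and P: "prime_ideal m"
    and U: "U m \<notin> m" and c: "c m \<notin> m" and c_in: "\<And>m'. m' \<in> T - {m} \<Longrightarrow> c m' \<in> m"
  shows "(\<Sum>m'\<in>T. U m' * (c m' * c m')) \<notin> m"
proof
  assume sum_in: "(\<Sum>m'\<in>T. U m' * (c m' * c m')) \<in> m"
  have I: "r_ideal m"
    using P by (simp add: prime_ideal_def)
  have "(\<Sum>m'\<in>T - {m}. U m' * (c m' * c m')) \<in> m"
    using c_in by (auto intro!: r_ideal_sum[OF I] r_ideal_mult_left[OF I])
  moreover have "U m * (c m * c m) = (\<Sum>m'\<in>T. U m' * (c m' * c m')) - (\<Sum>m'\<in>T - {m}. U m' * (c m' * c m'))"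
    using T m by (simp add: sum.remove)
  ultimately have "U m * (c m * c m) \<in> m"
    using r_ideal_diff[OF I sum_in] by simp
  then show False
    using P U c unfolding prime_ideal_def by blast
qed

lemma separating_offdiagonal_in:
  assumes I: "r_ideal m" and m: "m \<in> T" and p: "p \<in> (SIGMA m:T. T - {m})"
    and c_in: "\<And>m m'. m \<in> T \<Longrightarrow> m' \<in> T - {m} \<Longrightarrow> c m \<in> m'"
  shows "c (fst p) * c (snd p) \<in> m"
proof -
  obtain m1 m2 where p_eq: "p = (m1, m2)" and m12: "m1 \<in> T" "m2 \<in> T - {m1}"
    using p by blast
  show ?thesis
  proof (cases "m1 = m")
    case True
    then have "c m2 \<in> m"
      using c_in[of m2 m] m12 m by blast
    then show ?thesis
      unfolding p_eq by (simp add: r_ideal_mult_left[OF I])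
  next
    case False
    then have "c m1 \<in> m"
      using c_in[of m1 m] m12 m by blast
    then show ?thesis
      unfolding p_eq by (simp add: r_ideal_mult_right[OF I])
  qed
qed

lemma comaximal_if_no_common_max_ideal:
  fixes d t :: "'r::comm_ring_1"
  assumes "\<And>m. max_ideal m \<Longrightarrow> t \<in> m \<Longrightarrow> d \<notin> m"
  shows "\<exists>a b. a * d + b * t = 1"
proof (rule ccontr)
  assume no_comb: "\<nexists>a b. a * d + b * t = 1"
  define J where "J = {x + a * d | x a. x \<in> {y + b * t | y b. y \<in> {0}}}"
  have "r_ideal J"
    unfolding J_def by (intro r_ideal_extend) (simp add: r_ideal_def)
  moreover have "1 \<notin> J"
    using no_comb unfolding J_def by (auto, metis add.commute)
  ultimately obtain m where "max_ideal m" "J \<subseteq> m"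
    using ex_max_ideal_superset by blast
  moreover have "t \<in> J" "d \<in> J"
    unfolding J_def by (force intro: exI[of _ 0] exI[of _ 1])+
  ultimately show False
    using assms by blast
qed

definition multiplicative_set :: "'r::comm_ring_1 set \<Rightarrow> bool" where
  "multiplicative_set S \<longleftrightarrow> 1 \<in> S \<and> 0 \<notin> S \<and> (\<forall>s\<in>S. \<forall>t\<in>S. s * t \<in> S)"

lemma multiplicative_set_nonzeros: "multiplicative_set (nonzeros :: 'r::idom set)"
  by (simp add: multiplicative_set_def)

lemma multiplicative_set_compl_prime_ideal: "prime_ideal P \<Longrightarrow> multiplicative_set (UNIV - P)"
  by (auto simp: multiplicative_set_def prime_ideal_def r_ideal_zero)

section \<open>Modules over a commutative ring and the determinant trick\<close>

locale rmodule =
  fixes sm :: "'m::ab_group_add \<Rightarrow> 'r::comm_ring_1 \<Rightarrow> 'm"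
  assumes sm_one [simp]: "sm x 1 = x"
    and sm_sm [simp]: "sm (sm x a) b = sm x (a * b)"
    and sm_add_left: "sm (x + y) a = sm x a + sm y a"
    and sm_add_right: "sm x (a + b) = sm x a + sm x b"
begin

lemma sm_zero_right [simp]: "sm x 0 = 0"
  using sm_add_right[of x 0 0] by simp

lemma sm_zero_left [simp]: "sm 0 a = 0"
  using sm_add_left[of 0 0 a] by simp

lemma sm_diff_right: "sm x (a - b) = sm x a - sm x b"
  by (metis diff_add_cancel eq_diff_eq sm_add_right)

lemma sm_uminus_right: "sm x (- a) = - sm x a"
  using sm_diff_right[of x 0 a] by simp

lemma sm_sum_left: "sm (\<Sum>i\<in>I. f i) a = (\<Sum>i\<in>I. sm (f i) a)"
  by (induction I rule: infinite_finite_induct) (auto simp: sm_add_left)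

lemma sm_sum_right: "sm x (\<Sum>i\<in>I. f i) = (\<Sum>i\<in>I. sm x (f i))"
  by (induction I rule: infinite_finite_induct) (auto simp: sm_add_right)

definition r_linear :: "('m \<Rightarrow> 'm) \<Rightarrow> bool" where
  "r_linear h \<longleftrightarrow> (\<forall>x x'. h (x + x') = h x + h x') \<and> (\<forall>x r. h (sm x r) = sm (h x) r)"

lemma r_linear_add: "r_linear h \<Longrightarrow> h (x + x') = h x + h x'"
  by (simp add: r_linear_def)

lemma r_linear_sm: "r_linear h \<Longrightarrow> h (sm x r) = sm (h x) r"
  by (simp add: r_linear_def)

lemma r_linear_zero: "r_linear h \<Longrightarrow> h 0 = 0"
  using r_linear_add[of h 0 0] by simp

lemma r_linear_sum: "r_linear h \<Longrightarrow> h (\<Sum>i\<in>I. f i) = (\<Sum>i\<in>I. h (f i))"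
  by (induction I rule: infinite_finite_induct) (auto simp: r_linear_add r_linear_zero)

lemma r_linear_funpow: "r_linear y \<Longrightarrow> r_linear (y ^^ k)"
  by (induction k) (auto simp: r_linear_def)

definition poly_apply :: "('m \<Rightarrow> 'm) \<Rightarrow> 'r poly \<Rightarrow> 'm \<Rightarrow> 'm" where
  "poly_apply y p x = (\<Sum>k\<le>degree p. sm ((y ^^ k) x) (coeff p k))"

lemma poly_apply_bound:
  "degree p \<le> N \<Longrightarrow> poly_apply y p x = (\<Sum>k\<le>N. sm ((y ^^ k) x) (coeff p k))"
  unfolding poly_apply_def by (rule sum.mono_neutral_left) (auto simp: coeff_eq_0)

lemma poly_apply_0 [simp]: "poly_apply y 0 x = 0"
  by (simp add: poly_apply_def)

lemma poly_apply_const: "poly_apply y [:b:] x = sm x b"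
  by (simp add: poly_apply_def)

lemma poly_apply_1 [simp]: "poly_apply y 1 x = x"
  by (simp add: poly_apply_def)

lemma poly_apply_add: "poly_apply y (p + q) x = poly_apply y p x + poly_apply y q x"
proof -
  let ?N = "max (degree p) (degree q)"
  have "poly_apply y (p + q) x = (\<Sum>k\<le>?N. sm ((y ^^ k) x) (coeff (p + q) k))"
    by (rule poly_apply_bound) (simp add: degree_add_le)
  also have "\<dots> = (\<Sum>k\<le>?N. sm ((y ^^ k) x) (coeff p k)) + (\<Sum>k\<le>?N. sm ((y ^^ k) x) (coeff q k))"
    by (simp add: sm_add_right sum.distrib)
  also have "\<dots> = poly_apply y p x + poly_apply y q x"
    using poly_apply_bound[of p ?N y x] poly_apply_bound[of q ?N y x] by simp
  finally show ?thesis .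
qed

lemma poly_apply_sum: "poly_apply y (\<Sum>i\<in>I. f i) x = (\<Sum>i\<in>I. poly_apply y (f i) x)"
  by (induction I rule: infinite_finite_induct) (auto simp: poly_apply_add)

lemma poly_apply_smult: "poly_apply y (Polynomial.smult b p) x = sm (poly_apply y p x) b"
proof -
  have "poly_apply y (Polynomial.smult b p) x
      = (\<Sum>k\<le>degree p. sm ((y ^^ k) x) (coeff (Polynomial.smult b p) k))"
    by (rule poly_apply_bound) (simp add: degree_smult_le)
  then show ?thesis
    by (simp add: poly_apply_def sm_sum_left mult.commute)
qed

lemma poly_apply_pCons:
  assumes y: "r_linear y"
  shows "poly_apply y (pCons a p) x = sm x a + y (poly_apply y p x)"
proof -
  have "poly_apply y (pCons a p) x = (\<Sum>k\<le>Suc (degree p). sm ((y ^^ k) x) (coeff (pCons a p) k))"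
    by (rule poly_apply_bound) (simp add: degree_pCons_le)
  also have "\<dots> = sm x a + (\<Sum>k\<le>degree p. sm ((y ^^ Suc k) x) (coeff p k))"
    by (subst sum.atMost_Suc_shift) simp
  also have "\<dots> = sm x a + y (poly_apply y p x)"
    by (simp add: poly_apply_def r_linear_sum[OF y] r_linear_sm[OF y])
  finally show ?thesis .
qed

lemma poly_apply_mult:
  assumes y: "r_linear y"
  shows "poly_apply y (p * q) x = poly_apply y p (poly_apply y q x)"
proof (induction p)
  case (pCons a p)
  then show ?case
    by (simp add: poly_apply_add poly_apply_smult poly_apply_pCons[OF y])
qed simp

lemma r_linear_poly_apply:
  assumes y: "r_linear y"
  shows "r_linear (poly_apply y p)"
proof -
  have y_pow: "\<And>k. r_linear (y ^^ k)"
    by (rule r_linear_funpow[OF y])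
  show ?thesis
    unfolding r_linear_def poly_apply_def
    by (auto simp: r_linear_add[OF y_pow] r_linear_sm[OF y_pow] sm_add_left sum.distrib sm_sum_left
        ac_simps)
qed

lemma poly_apply_commute:
  assumes h: "r_linear h" and hy: "\<And>x. h (y x) = y (h x)"
  shows "h (poly_apply y p x) = poly_apply y p (h x)"
proof -
  have "h ((y ^^ k) x) = (y ^^ k) (h x)" for k x
    using hy by (induction k) auto
  then show ?thesis
    by (simp add: poly_apply_def r_linear_sum[OF h] r_linear_sm[OF h])
qed

lemma cayley_hamilton:
  assumes y: "r_linear y" and A: "A \<in> carrier_mat n n"
    and gen: "\<And>x. \<exists>c. x = (\<Sum>i<n. sm (xs ! i) (c i))"
    and rep: "\<And>i. i < n \<Longrightarrow> y (xs ! i) = (\<Sum>j<n. sm (xs ! j) (A $$ (i, j)))"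
  shows "poly_apply y (char_poly A) x = 0"
proof -
  define C where "C = char_poly_matrix A"
  have C: "C \<in> carrier_mat n n"
    using A by (simp add: C_def)
  have row: "(\<Sum>j<n. poly_apply y (C $$ (i, j)) (xs ! j)) = 0" if i: "i < n" for i
  proof -
    have "poly_apply y (C $$ (i, j)) z = (if i = j then y z else 0) - sm z (A $$ (i, j))"
      if "j < n" for j z
      using A i that
      by (auto simp: C_def char_poly_matrix_def poly_apply_add poly_apply_const poly_apply_pCons[OF y]
          sm_uminus_right r_linear_zero[OF y])
    then have "(\<Sum>j<n. poly_apply y (C $$ (i, j)) (xs ! j))
        = y (xs ! i) - (\<Sum>j<n. sm (xs ! j) (A $$ (i, j)))"
      using i by (simp add: sum_subtractf if_distrib[of "\<lambda>f. f _"] cong: if_cong)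
    then show ?thesis
      using rep[OF i] by simp
  qed
  have adj: "adj_mat C * C = det C \<cdot>\<^sub>m 1\<^sub>m n" and adj_C: "adj_mat C \<in> carrier_mat n n"
    using adj_mat[OF C] by auto
  have generators_killed: "poly_apply y (det C) (xs ! k) = 0" if k: "k < n" for k
  proof -
    have "poly_apply y (det C) (xs ! k) = (\<Sum>j<n. if k = j then poly_apply y (det C) (xs ! j) else 0)"
      using k by simp
    also have "\<dots> = (\<Sum>j<n. poly_apply y ((det C \<cdot>\<^sub>m 1\<^sub>m n) $$ (k, j)) (xs ! j))"
      by (rule sum.cong) (auto simp: k)
    also have "\<dots> = (\<Sum>j<n. \<Sum>l<n. poly_apply y (adj_mat C $$ (k, l) * C $$ (l, j)) (xs ! j))"
      unfolding adj[symmetric] using adj_C C k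
      by (intro sum.cong refl) (simp add: index_mult_mat scalar_prod_def poly_apply_sum atLeast0LessThan)
    also have "\<dots> = (\<Sum>l<n. poly_apply y (adj_mat C $$ (k, l))
        (\<Sum>j<n. poly_apply y (C $$ (l, j)) (xs ! j)))"
      by (subst sum.swap) (simp add: poly_apply_mult[OF y] r_linear_sum[OF r_linear_poly_apply[OF y]])
    also have "\<dots> = 0"
      by (simp add: row r_linear_zero[OF r_linear_poly_apply[OF y]])
    finally show ?thesis .
  qed
  obtain c where "x = (\<Sum>i<n. sm (xs ! i) (c i))"
    using gen by blast
  then show ?thesis
    using r_linear_poly_apply[OF y]
    by (simp add: C_def char_poly_def r_linear_sum r_linear_sm generators_killed flip: C_def)
qed

lemma poly_char_poly_0:
  fixes A :: "'r::comm_ring_1 mat"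
  assumes A: "A \<in> carrier_mat n n"
  shows "poly (char_poly A) 0 = (-1) ^ n * det A"
proof -
  have eval_0: "comm_ring_hom (\<lambda>p::'r poly. poly p 0)"
    by unfold_locales auto
  have "poly (char_poly A) 0 = det (map_mat (\<lambda>p. poly p 0) (char_poly_matrix A))"
    unfolding char_poly_def by (rule comm_ring_hom.hom_det[OF eval_0, symmetric])
  also have "map_mat (\<lambda>p. poly p 0) (char_poly_matrix A) = (-1) \<cdot>\<^sub>m A"
    using A by (auto simp: char_poly_matrix_def intro!: eq_matI)
  finally show ?thesis
    using A by simp
qed

lemma poly_cofactor_of_congruent_matrix:
  assumes y: "r_linear y" and A: "A \<in> carrier_mat n n"
    and gen: "\<And>x. \<exists>c. x = (\<Sum>i<n. sm (xs ! i) (c i))"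
    and rep: "\<And>i. i < n \<Longrightarrow> y (xs ! i) = (\<Sum>j<n. sm (xs ! j) (A $$ (i, j)))"
    and T: "\<And>m. m \<in> T \<Longrightarrow> prime_ideal m"
    and cong: "\<And>m. m \<in> T \<Longrightarrow> \<exists>s. s \<notin> m \<and>
      (\<forall>i<n. \<forall>j<n. A $$ (i, j) - (if i = j then s else 0) \<in> m)"
  shows "\<exists>a q. (\<forall>m\<in>T. a \<notin> m) \<and> (\<forall>x. y (poly_apply y q x) = sm x a)"
proof -
  obtain c0 q where cq: "char_poly A = pCons c0 q"
    by (rule pCons_cases)
  have "sm x c0 + y (poly_apply y q x) = 0" for x
    using cayley_hamilton[OF y A gen rep, of x] by (simp add: cq poly_apply_pCons[OF y])
  then have cofactor: "y (poly_apply y q x) = sm x (- c0)" for x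
    by (simp add: sm_uminus_right eq_neg_iff_add_eq_0 add.commute)
  have "- c0 \<notin> m" if m: "m \<in> T" for m
  proof
    assume "- c0 \<in> m"
    have I: "r_ideal m"
      using T[OF m] by (simp add: prime_ideal_def)
    have "det A = (- ((-1) ^ n)) * (- c0)"
      using poly_char_poly_0[OF A] by (simp add: cq flip: power_mult_distrib)
    then have "det A \<in> m"
      by (metis r_ideal_mult_left[OF I \<open>- c0 \<in> m\<close>])
    moreover obtain s where s: "s \<notin> m"
      and As: "\<forall>i<n. \<forall>j<n. A $$ (i, j) - (if i = j then s else 0) \<in> m"
      using cong[OF m] by blast
    then have "det A \<notin> m"
      by (intro det_notin_prime_ideal[OF T[OF m] A s]) blast
    ultimately show False
      by simp
  qed
  then show ?thesis
    using cofactor by blast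
qed

(* Cayley-Hamilton for a matrix of y on the generators xs, chosen congruent to s times the identity
   modulo every prime of T. *)

lemma ex_poly_cofactor:
  assumes y: "r_linear y"
    and gen: "\<And>x. \<exists>c. x = (\<Sum>i<length xs. sm (xs ! i) (c i))"
    and y_eq: "\<And>x. y x = sm x s + (\<Sum>p\<in>P. sm (e p x) (r p))"
    and T: "\<And>m. m \<in> T \<Longrightarrow> prime_ideal m"
    and s: "\<And>m. m \<in> T \<Longrightarrow> s \<notin> m"
    and r: "\<And>m p. m \<in> T \<Longrightarrow> p \<in> P \<Longrightarrow> r p \<in> m"
  shows "\<exists>a q. (\<forall>m\<in>T. a \<notin> m) \<and> (\<forall>x. y (poly_apply y q x) = sm x a)"
proof -
  define n where "n = length xs"
  obtain co where co: "\<And>z. (\<Sum>j<n. sm (xs ! j) (co z j)) = z"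
    using gen unfolding n_def by metis
  define A where "A = mat n n (\<lambda>(i, j). (if i = j then s else 0) + (\<Sum>p\<in>P. r p * co (e p (xs ! i)) j))"
  have A: "A \<in> carrier_mat n n"
    by (simp add: A_def)
  have sm_if: "sm x (if b then s else 0) = (if b then sm x s else 0)" for x b
    by simp
  have "y (xs ! i) = (\<Sum>j<n. sm (xs ! j) (A $$ (i, j)))" if i: "i < n" for i
  proof -
    have "(\<Sum>j<n. sm (xs ! j) (A $$ (i, j)))
        = (\<Sum>j<n. sm (xs ! j) (if i = j then s else 0))
          + (\<Sum>j<n. \<Sum>p\<in>P. sm (xs ! j) (r p * co (e p (xs ! i)) j))"
      using i by (simp add: A_def sm_add_right sm_sum_right sum.distrib)
    also have "\<dots> = sm (xs ! i) s + (\<Sum>p\<in>P. \<Sum>j<n. sm (sm (xs ! j) (co (e p (xs ! i)) j)) (r p))"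
      using i by (subst sum.swap) (simp add: sm_if mult.commute)
    also have "\<dots> = y (xs ! i)"
      by (simp only: y_eq co sm_sum_left[symmetric])
    finally show ?thesis ..
  qed
  moreover have "\<exists>s. s \<notin> m \<and> (\<forall>i<n. \<forall>j<n. A $$ (i, j) - (if i = j then s else 0) \<in> m)"
    if m: "m \<in> T" for m
    using s[OF m] r[OF m] T[OF m]
    by (auto simp: A_def prime_ideal_def intro!: exI[of _ s] r_ideal_sum r_ideal_mult_right)
  ultimately show ?thesis
    using poly_cofactor_of_congruent_matrix[OF y A gen[folded n_def] _ T] by blast
qed

end

section \<open>Modules over an algebra\<close>

abbreviation (input) scalar_act :: "('r \<Rightarrow> 'a) \<Rightarrow> ('m \<Rightarrow> 'a \<Rightarrow> 'm) \<Rightarrow> 'm \<Rightarrow> 'r \<Rightarrow> 'm" where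
  "scalar_act \<phi> act \<equiv> \<lambda>x r. act x (\<phi> r)"

definition right_module_hom ::
  "('m::ab_group_add \<Rightarrow> 'a \<Rightarrow> 'm) \<Rightarrow> ('n::ab_group_add \<Rightarrow> 'a \<Rightarrow> 'n) \<Rightarrow> ('m \<Rightarrow> 'n) \<Rightarrow> bool"
  where "right_module_hom actM actN f \<longleftrightarrow>
    (\<forall>x y. f (x + y) = f x + f y) \<and> (\<forall>x a. f (actM x a) = actN (f x) a)"

lemma right_module_hom_add: "right_module_hom actM actN f \<Longrightarrow> f (x + y) = f x + f y"
  by (simp add: right_module_hom_def)

lemma right_module_hom_act: "right_module_hom actM actN f \<Longrightarrow> f (actM x a) = actN (f x) a"
  by (simp add: right_module_hom_def)

lemma right_module_hom_zero: "right_module_hom actM actN f \<Longrightarrow> f 0 = 0"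
  using right_module_hom_add[of actM actN f 0 0] by simp

lemma right_module_hom_diff: "right_module_hom actM actN f \<Longrightarrow> f (x - y) = f x - f y"
  using right_module_hom_add[of actM actN f "x - y" y] by (simp add: eq_diff_eq)

lemma right_module_hom_sum:
  assumes f: "right_module_hom actM actN f"
  shows "f (\<Sum>i\<in>I. g i) = (\<Sum>i\<in>I. f (g i))"
  by (induction I rule: infinite_finite_induct)
    (simp_all add: right_module_hom_add[OF f] right_module_hom_zero[OF f])

lemma right_module_hom_comp:
  "right_module_hom actM actN f \<Longrightarrow> right_module_hom actN actK g \<Longrightarrow> right_module_hom actM actK (g \<circ> f)"
  by (simp add: right_module_hom_def)

lemma is_direct_summand_if_retraction:
  fixes actM :: "'m::ab_group_add \<Rightarrow> 'a::ring_1 \<Rightarrow> 'm" and actL :: "'l::ab_group_add \<Rightarrow> 'a \<Rightarrow> 'l"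
  assumes M: "right_module actM"
    and f: "right_module_hom actM actL f" and g: "right_module_hom actL actM g" and gf: "\<And>x. g (f x) = x"
  shows "is_direct_summand UNIV (+) actM UNIV (+) actL UNIV"
  unfolding is_direct_summand_def
proof (intro exI[of _ f] exI[of _ "{z. g z = 0}"] conjI ballI)
  have "actM 0 a = 0" for a
    using M unfolding right_module_def by (metis add_cancel_right_right add_0)
  then show "actL z a \<in> {z. g z = 0}" if "z \<in> {z. g z = 0}" for z a
    using that by (simp add: right_module_hom_act[OF g])
  show "\<exists>!p. fst p \<in> f ` UNIV \<and> snd p \<in> {z. g z = 0} \<and> n = fst p + snd p" for n
  proof (rule ex1I[of _ "(f (g n), n - f (g n))"])
    fix p assume p: "fst p \<in> f ` UNIV \<and> snd p \<in> {z. g z = 0} \<and> n = fst p + snd p"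
    then obtain x where x: "fst p = f x"
      by blast
    then have "g n = x"
      using p gf by (simp add: right_module_hom_add[OF g])
    then show "p = (f (g n), n - f (g n))"
      using p x by (simp add: prod_eq_iff)
  qed (simp add: right_module_hom_diff[OF g] gf)
  show "inj_on f UNIV"
    by (metis gf inj_onI)
qed (use right_module_hom_zero[OF g] in \<open>auto simp: right_module_hom_add[OF f] right_module_hom_act[OF f]
    right_module_hom_add[OF g]\<close>)

definition mult_factors_through ::
  "('r \<Rightarrow> 'a) \<Rightarrow> ('m::ab_group_add \<Rightarrow> 'a \<Rightarrow> 'm) \<Rightarrow> ('n::ab_group_add \<Rightarrow> 'a \<Rightarrow> 'n) \<Rightarrow> 'r \<Rightarrow> bool"
  where "mult_factors_through \<phi> actM actN u \<longleftrightarrow>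
    (\<exists>f g. right_module_hom actM actN f \<and> right_module_hom actN actM g \<and> (\<forall>x. g (f x) = actM x (\<phi> u)))"

locale alg_module =
  fixes \<phi> :: "'r::idom \<Rightarrow> 'a::ring_1" and act :: "'m::ab_group_add \<Rightarrow> 'a \<Rightarrow> 'm"
  assumes algebra_map: "is_algebra_map \<phi>" and right_module: "right_module act"
begin

lemma phi_one [simp]: "\<phi> 1 = 1"
  and phi_add: "\<phi> (r + s) = \<phi> r + \<phi> s"
  and phi_mult: "\<phi> (r * s) = \<phi> r * \<phi> s"
  and phi_central: "\<phi> r * a = a * \<phi> r"
  using algebra_map unfolding is_algebra_map_def by blast+

lemma act_one [simp]: "act x 1 = x"
  and act_mult: "act x (a * b) = act (act x a) b"
  and act_add_left: "act (x + y) a = act x a + act y a"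
  and act_add_right: "act x (a + b) = act x a + act x b"
  using right_module unfolding right_module_def by blast+

lemma act_zero_right [simp]: "act x 0 = 0"
  using act_add_right[of x 0 0] by simp

lemma act_zero_left [simp]: "act 0 a = 0"
  using act_add_left[of 0 0 a] by simp

lemma act_diff_left: "act (x - y) a = act x a - act y a"
  using act_add_left[of "x - y" y a] by (simp add: eq_diff_eq)

lemma act_uminus_left: "act (- x) a = - act x a"
  using act_diff_left[of 0 x a] by simp

lemma act_sum_left: "act (\<Sum>i\<in>I. f i) a = (\<Sum>i\<in>I. act (f i) a)"
  by (induction I rule: infinite_finite_induct) (auto simp: act_add_left)

lemma act_sum_right: "act x (\<Sum>i\<in>I. f i) = (\<Sum>i\<in>I. act x (f i))"
  by (induction I rule: infinite_finite_induct) (auto simp: act_add_right)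

sublocale rmodule "scalar_act \<phi> act"
  by unfold_locales
    (simp_all add: act_mult[symmetric] phi_mult[symmetric] phi_add act_add_left act_add_right)

lemma act_scalar_commute: "act (act x (\<phi> r)) a = act (act x a) (\<phi> r)"
  by (metis act_mult phi_central)

lemma right_module_hom_scaled:
  "right_module_hom actX act f \<Longrightarrow> right_module_hom actX act (\<lambda>x. act (f x) (\<phi> r))"
  by (simp add: right_module_hom_def act_add_left act_scalar_commute)

lemma right_module_hom_sum_fun:
  "(\<And>i. i \<in> I \<Longrightarrow> right_module_hom actX act (f i)) \<Longrightarrow> right_module_hom actX act (\<lambda>x. \<Sum>i\<in>I. f i x)"
  by (simp add: right_module_hom_def sum.distrib act_sum_left)

lemma r_linear_if_right_module_hom: "right_module_hom act act y \<Longrightarrow> r_linear y"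
  by (simp add: right_module_hom_def r_linear_def)

lemma right_module_hom_poly_apply:
  assumes y: "right_module_hom act act y"
  shows "right_module_hom act act (poly_apply y q)"
proof -
  have "r_linear (\<lambda>x. act x a)" for a
    by (simp add: r_linear_def act_add_left act_scalar_commute)
  then have "act (poly_apply y q x) a = poly_apply y q (act x a)" for x a
    by (rule poly_apply_commute) (simp add: right_module_hom_act[OF y])
  then show ?thesis
    using r_linear_poly_apply[OF r_linear_if_right_module_hom[OF y]]
    by (simp add: right_module_hom_def r_linear_add)
qed

lemma no_torsion:
  assumes tf: "torsion_free (scalar_act \<phi> act)" and r: "r \<noteq> 0" and xr: "act x (\<phi> r) = 0"
  shows "x = 0"
proof -
  have xr': "act x (\<phi> (v * r)) = 0" for v
    using xr by (simp flip: sm_sm add: mult.commute)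
  have "(\<exists>u\<in>nonzeros. act (act x (\<phi> v) - act z (\<phi> 1)) (\<phi> u) = 0) \<longleftrightarrow>
        (\<exists>u\<in>nonzeros. act (act 0 (\<phi> v) - act z (\<phi> 1)) (\<phi> u) = 0)" for z v
  proof
    assume "\<exists>u\<in>nonzeros. act (act x (\<phi> v) - act z (\<phi> 1)) (\<phi> u) = 0"
    then obtain u where u: "u \<noteq> 0" "act (act x (\<phi> v) - z) (\<phi> u) = 0"
      by auto
    then have "act x (\<phi> (v * u)) = act z (\<phi> u)"
      by (simp add: act_diff_left)
    then have "act (act z (\<phi> u)) (\<phi> r) = 0"
      using xr'[of "v * u"] by (metis sm_sm mult.commute)
    then have "act (0 - act z (\<phi> 1)) (\<phi> (u * r)) = 0"
      by (simp add: act_uminus_left)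
    then show "\<exists>u\<in>nonzeros. act (act 0 (\<phi> v) - act z (\<phi> 1)) (\<phi> u) = 0"
      using u r by auto
  next
    assume "\<exists>u\<in>nonzeros. act (act 0 (\<phi> v) - act z (\<phi> 1)) (\<phi> u) = 0"
    then obtain u where u: "u \<noteq> 0" "act z (\<phi> u) = 0"
      by (auto simp: act_uminus_left)
    have "act (act x (\<phi> v) - act z (\<phi> 1)) (\<phi> (u * r)) = act x (\<phi> (v * u * r)) - act (act z (\<phi> u)) (\<phi> r)"
      by (simp add: act_diff_left ac_simps)
    also have "\<dots> = 0"
      using xr'[of "v * u"] u by simp
    finally show "\<exists>u\<in>nonzeros. act (act x (\<phi> v) - act z (\<phi> 1)) (\<phi> u) = 0"
      using u r by (intro bexI[of _ "u * r"]) auto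
  qed
  then have "loc_class (scalar_act \<phi> act) nonzeros x 1 = loc_class (scalar_act \<phi> act) nonzeros 0 1"
    by (auto simp: loc_class_def loc_rel_def)
  then show ?thesis
    using tf unfolding torsion_free_def inj_def by blast
qed

lemma fg_scalar_generators:
  assumes fg: "fg_right_module act" and fg_base: "fg_over_base \<phi>"
  shows "\<exists>xs. \<forall>x. \<exists>c. x = (\<Sum>i<length xs. act (xs ! i) (\<phi> (c i)))"
proof -
  obtain G where G: "finite G" "\<And>x. \<exists>c. x = (\<Sum>g\<in>G. act g (c g))"
    using fg unfolding fg_right_module_def by blast
  obtain H d where H: "finite H" "\<And>a. a = (\<Sum>h\<in>H. \<phi> (d a h) * h)"
    using fg_base unfolding fg_over_base_def by metis
  obtain ps where ps: "set ps = G \<times> H" "distinct ps"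
    using finite_distinct_list[of "G \<times> H"] G(1) H(1) by blast
  define xs where "xs = map (\<lambda>(g, h). act g h) ps"
  have "\<exists>c. x = (\<Sum>i<length xs. act (xs ! i) (\<phi> (c i)))" for x
  proof -
    obtain cg where cg: "x = (\<Sum>g\<in>G. act g (cg g))"
      using G(2) by blast
    define F where "F p = act (act (fst p) (snd p)) (\<phi> (d (cg (fst p)) (snd p)))" for p
    have "x = (\<Sum>g\<in>G. act g (\<Sum>h\<in>H. \<phi> (d (cg g) h) * h))"
      unfolding cg by (rule sum.cong[OF refl]) (subst H(2), rule refl)
    also have "\<dots> = (\<Sum>p\<in>G \<times> H. F p)"
      unfolding F_def act_sum_right by (simp add: phi_central act_mult sum.cartesian_product split_def)
    also have "\<dots> = sum_list (map F ps)"
      using ps by (simp add: sum_list_distinct_conv_sum_set)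
    also have "\<dots> = (\<Sum>i<length ps. F (ps ! i))"
      by (simp add: sum_list_sum_nth atLeast0LessThan)
    also have "\<dots> = (\<Sum>i<length xs. act (xs ! i) (\<phi> (d (cg (fst (ps ! i))) (snd (ps ! i)))))"
      unfolding xs_def F_def by (intro sum.cong) (auto simp: case_prod_beta)
    finally show ?thesis
      by (rule exI[of _ "\<lambda>i. d (cg (fst (ps ! i))) (snd (ps ! i))"])
  qed
  then show ?thesis
    by blast
qed

lemma sum_scaled_homs_comp:
  assumes T: "finite T" and \<Delta>: "\<And>m. m \<in> T \<Longrightarrow> right_module_hom actN act (\<Delta> m)"
  shows "(\<Sum>m\<in>T. act (\<Delta> m (\<Sum>m'\<in>T. actN (\<Gamma> m' x) (\<phi> (c m')))) (\<phi> (c m)))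
    = (\<Sum>m\<in>T. act (\<Delta> m (\<Gamma> m x)) (\<phi> (c m * c m)))
      + (\<Sum>p\<in>(SIGMA m:T. T - {m}). act (\<Delta> (fst p) (\<Gamma> (snd p) x)) (\<phi> (c (fst p) * c (snd p))))"
proof -
  have "(\<Sum>m\<in>T. act (\<Delta> m (\<Sum>m'\<in>T. actN (\<Gamma> m' x) (\<phi> (c m')))) (\<phi> (c m)))
      = (\<Sum>m\<in>T. \<Sum>m'\<in>T. act (\<Delta> m (\<Gamma> m' x)) (\<phi> (c m * c m')))"
    by (intro sum.cong refl)
      (simp add: right_module_hom_sum[OF \<Delta>] right_module_hom_act[OF \<Delta>] act_sum_left mult.commute)
  also have "\<dots> = (\<Sum>m\<in>T. act (\<Delta> m (\<Gamma> m x)) (\<phi> (c m * c m))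
      + (\<Sum>m'\<in>T - {m}. act (\<Delta> m (\<Gamma> m' x)) (\<phi> (c m * c m'))))"
    using T by (simp add: sum.remove)
  also have "\<dots> = (\<Sum>m\<in>T. act (\<Delta> m (\<Gamma> m x)) (\<phi> (c m * c m)))
      + (\<Sum>p\<in>(SIGMA m:T. T - {m}). act (\<Delta> (fst p) (\<Gamma> (snd p) x)) (\<phi> (c (fst p) * c (snd p))))"
    using T by (simp add: sum.distrib sum.Sigma split_def)
  finally show ?thesis .
qed

end

lemma mult_factors_through_mult:
  assumes M: "alg_module \<phi> actM" and N: "alg_module \<phi> actN"
    and u: "mult_factors_through \<phi> actM actN u"
  shows "mult_factors_through \<phi> actM actN (c * u)"
proof -
  interpret M: alg_module \<phi> actM by (rule M)
  interpret N: alg_module \<phi> actN by (rule N)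
  obtain f g where f: "right_module_hom actM actN f" and g: "right_module_hom actN actM g"
    and gf: "\<And>x. g (f x) = actM x (\<phi> u)"
    using u unfolding mult_factors_through_def by blast
  have "g (actN (f x) (\<phi> c)) = actM x (\<phi> (c * u))" for x
    by (simp add: right_module_hom_act[OF g] gf mult.commute)
  then show ?thesis
    using N.right_module_hom_scaled[OF f] g unfolding mult_factors_through_def by blast
qed

lemma mult_factors_through_prod:
  fixes actN :: "'n::ab_group_add \<Rightarrow> 'a::ring_1 \<Rightarrow> 'n" and actK :: "'k::ab_group_add \<Rightarrow> 'a \<Rightarrow> 'k"
  assumes M: "alg_module \<phi> actM"
    and a: "mult_factors_through \<phi> actM actN a" and b: "mult_factors_through \<phi> actM actK b"
  shows "mult_factors_through \<phi> actM (\<lambda>(y, z) c. (actN y c, actK z c)) (a + b)"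
proof -
  interpret M: alg_module \<phi> actM by (rule M)
  obtain f g where f: "right_module_hom actM actN f" and g: "right_module_hom actN actM g"
    and gf: "\<And>x. g (f x) = actM x (\<phi> a)"
    using a unfolding mult_factors_through_def by blast
  obtain f' g' where f': "right_module_hom actM actK f'" and g': "right_module_hom actK actM g'"
    and gf': "\<And>x. g' (f' x) = actM x (\<phi> b)"
    using b unfolding mult_factors_through_def by blast
  have "right_module_hom actM (\<lambda>(y, z) c. (actN y c, actK z c)) (\<lambda>x. (f x, f' x))"
    using f f' by (simp add: right_module_hom_def)
  moreover have "right_module_hom (\<lambda>(y, z) c. (actN y c, actK z c)) actM (\<lambda>(y, z). g y + g' z)"
    using g g' by (auto simp: right_module_hom_def M.act_add_left)
  moreover have "(\<lambda>(y, z). g y + g' z) (f x, f' x) = actM x (\<phi> (a + b))" for x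
    by (simp add: gf gf' M.phi_add M.act_add_right)
  ultimately show ?thesis
    unfolding mult_factors_through_def by blast
qed

lemma mult_factors_through_one_imp_is_direct_summand:
  assumes M: "alg_module \<phi> actM" and one: "mult_factors_through \<phi> actM actL 1"
  shows "is_direct_summand UNIV (+) actM UNIV (+) actL UNIV"
proof -
  interpret M: alg_module \<phi> actM by (rule M)
  show ?thesis
    using one M.right_module is_direct_summand_if_retraction
    unfolding mult_factors_through_def by fastforce
qed

section \<open>From local to global factorisations\<close>

lemma mult_factors_through_if_congruent_scalar:
  assumes M: "alg_module \<phi> actM" and fg_base: "fg_over_base \<phi>" and fg: "fg_right_module actM"
    and \<gamma>: "right_module_hom actM actN \<gamma>" and \<delta>: "right_module_hom actN actM \<delta>"
    and \<delta>\<gamma>: "\<And>x. \<delta> (\<gamma> x) = actM x (\<phi> s) + (\<Sum>p\<in>P. actM (e p x) (\<phi> (r p)))"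
    and T: "\<And>m. m \<in> T \<Longrightarrow> prime_ideal m" and s: "\<And>m. m \<in> T \<Longrightarrow> s \<notin> m"
    and r: "\<And>m p. m \<in> T \<Longrightarrow> p \<in> P \<Longrightarrow> r p \<in> m"
  shows "\<exists>a. (\<forall>m\<in>T. a \<notin> m) \<and> mult_factors_through \<phi> actM actN a"
proof -
  interpret M: alg_module \<phi> actM by (rule M)
  obtain xs where xs: "\<And>x. \<exists>k. x = (\<Sum>i<length xs. actM (xs ! i) (\<phi> (k i)))"
    using M.fg_scalar_generators[OF fg fg_base] by blast
  have y: "right_module_hom actM actM (\<delta> \<circ> \<gamma>)"
    using \<gamma> \<delta> by (rule right_module_hom_comp)
  have y_eq: "(\<delta> \<circ> \<gamma>) x = actM x (\<phi> s) + (\<Sum>p\<in>P. actM (e p x) (\<phi> (r p)))" for x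
    by (simp add: \<delta>\<gamma>)
  have "\<exists>a q. (\<forall>m\<in>T. a \<notin> m) \<and> (\<forall>x. (\<delta> \<circ> \<gamma>) (M.poly_apply (\<delta> \<circ> \<gamma>) q x) = actM x (\<phi> a))"
    by (rule M.ex_poly_cofactor[OF M.r_linear_if_right_module_hom[OF y] xs y_eq])
      (auto intro: T r dest: s)
  then obtain a q where a: "\<forall>m\<in>T. a \<notin> m"
    and aq: "\<forall>x. (\<delta> \<circ> \<gamma>) (M.poly_apply (\<delta> \<circ> \<gamma>) q x) = actM x (\<phi> a)"
    by blast
  have "right_module_hom actM actN (\<gamma> \<circ> M.poly_apply (\<delta> \<circ> \<gamma>) q)"
    using M.right_module_hom_poly_apply[OF y] \<gamma> by (rule right_module_hom_comp)
  then have "mult_factors_through \<phi> actM actN a"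
    unfolding mult_factors_through_def using \<delta> aq
    by (intro exI[of _ "\<gamma> \<circ> M.poly_apply (\<delta> \<circ> \<gamma>) q"] exI[of _ \<delta>]) simp
  then show ?thesis
    using a by blast
qed

lemma mult_factors_through_glue:
  assumes M: "alg_module \<phi> actM" and N: "alg_module \<phi> actN"
    and fg_base: "fg_over_base \<phi>" and fg: "fg_right_module actM"
    and T: "finite T" "\<And>m. m \<in> T \<Longrightarrow> max_ideal m"
    and local: "\<And>m. m \<in> T \<Longrightarrow> \<exists>u. u \<notin> m \<and> mult_factors_through \<phi> actM actN u"
  shows "\<exists>a. (\<forall>m\<in>T. a \<notin> m) \<and> mult_factors_through \<phi> actM actN a"
proof -
  interpret M: alg_module \<phi> actM by (rule M)
  interpret N: alg_module \<phi> actN by (rule N)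
  obtain U \<Gamma> \<Delta> where U: "\<And>m. m \<in> T \<Longrightarrow> U m \<notin> m"
    and \<Gamma>: "\<And>m. m \<in> T \<Longrightarrow> right_module_hom actM actN (\<Gamma> m)"
    and \<Delta>: "\<And>m. m \<in> T \<Longrightarrow> right_module_hom actN actM (\<Delta> m)"
    and \<Delta>\<Gamma>: "\<And>m x. m \<in> T \<Longrightarrow> \<Delta> m (\<Gamma> m x) = actM x (\<phi> (U m))"
    using local unfolding mult_factors_through_def by metis
  obtain c where c_notin: "\<And>m. m \<in> T \<Longrightarrow> c m \<notin> m"
    and c_in: "\<And>m m'. m \<in> T \<Longrightarrow> m' \<in> T - {m} \<Longrightarrow> c m \<in> m'"
    using ex_separating_element[OF T] by metis
  define \<gamma> where "\<gamma> x = (\<Sum>m\<in>T. actN (\<Gamma> m x) (\<phi> (c m)))" for x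
  define \<delta> where "\<delta> z = (\<Sum>m\<in>T. actM (\<Delta> m z) (\<phi> (c m)))" for z
  have \<gamma>: "right_module_hom actM actN \<gamma>"
    unfolding \<gamma>_def using \<Gamma> by (intro N.right_module_hom_sum_fun N.right_module_hom_scaled)
  have \<delta>: "right_module_hom actN actM \<delta>"
    unfolding \<delta>_def using \<Delta> by (intro M.right_module_hom_sum_fun M.right_module_hom_scaled)
  (* Modulo m \<in> T only the (m, m) term of \<delta> \<circ> \<gamma> survives, and it is U m * c m\<^sup>2. *)
  have "\<delta> (\<gamma> x) = actM x (\<phi> (\<Sum>m\<in>T. U m * (c m * c m)))
      + (\<Sum>p\<in>(SIGMA m:T. T - {m}). actM (\<Delta> (fst p) (\<Gamma> (snd p) x)) (\<phi> (c (fst p) * c (snd p))))" for x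
    using M.sum_scaled_homs_comp[OF T(1) \<Delta>, where \<Gamma> = \<Gamma> and x = x and c = c]
    by (simp add: \<gamma>_def \<delta>_def \<Delta>\<Gamma> M.sm_sum_right)
  then show ?thesis
  proof (rule mult_factors_through_if_congruent_scalar[OF M fg_base fg \<gamma> \<delta>])
    fix m assume m: "m \<in> T"
    show "prime_ideal m"
      using T(2)[OF m] by (rule max_ideal_imp_prime_ideal)
    then show "(\<Sum>m\<in>T. U m * (c m * c m)) \<notin> m"
      using T(1) m U[OF m] c_notin[OF m] c_in[of _ m] by (intro separating_squares_sum_notin) auto
    show "c (fst p) * c (snd p) \<in> m" if "p \<in> (SIGMA m:T. T - {m})" for p
      using T(2)[OF m] m that c_in by (intro separating_offdiagonal_in) (auto simp: max_ideal_def)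
  qed
qed

section \<open>Localisation of torsion-free modules\<close>

definition carrier_hom ::
  "'x set \<Rightarrow> ('x \<Rightarrow> 'x \<Rightarrow> 'x) \<Rightarrow> ('x \<Rightarrow> 's \<Rightarrow> 'x) \<Rightarrow>
   'y set \<Rightarrow> ('y \<Rightarrow> 'y \<Rightarrow> 'y) \<Rightarrow> ('y \<Rightarrow> 's \<Rightarrow> 'y) \<Rightarrow> 's set \<Rightarrow> ('x \<Rightarrow> 'y) \<Rightarrow> bool"
  where "carrier_hom CM addM actM CN addN actN Sc f \<longleftrightarrow>
    (\<forall>x\<in>CM. f x \<in> CN) \<and> (\<forall>x\<in>CM. \<forall>y\<in>CM. f (addM x y) = addN (f x) (f y)) \<and>
    (\<forall>x\<in>CM. \<forall>a\<in>Sc. f (actM x a) = actN (f x) a)"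

lemma ex_direct_sum_projection:
  assumes f_inj: "inj_on f CM"
    and decomp: "\<And>n. n \<in> CN \<Longrightarrow> \<exists>!p. fst p \<in> f ` CM \<and> snd p \<in> C \<and> n = addN (fst p) (snd p)"
    and closed: "\<And>x c. x \<in> CM \<Longrightarrow> c \<in> C \<Longrightarrow> addN (f x) c \<in> CN"
  shows "\<exists>g. (\<forall>y\<in>CN. g y \<in> CM \<and> (\<exists>c\<in>C. y = addN (f (g y)) c)) \<and>
    (\<forall>x\<in>CM. \<forall>c\<in>C. g (addN (f x) c) = x)"
proof -
  define g where "g y = (SOME x. x \<in> CM \<and> (\<exists>c\<in>C. y = addN (f x) c))" for y
  have g_spec: "g y \<in> CM \<and> (\<exists>c\<in>C. y = addN (f (g y)) c)" if "\<exists>x\<in>CM. \<exists>c\<in>C. y = addN (f x) c" for y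
    unfolding g_def by (rule someI_ex) (use that in blast)
  have "g y \<in> CM \<and> (\<exists>c\<in>C. y = addN (f (g y)) c)" if y: "y \<in> CN" for y
    using ex1_implies_ex[OF decomp[OF y]] by (intro g_spec) force
  moreover have "g (addN (f x) c) = x" if x: "x \<in> CM" and c: "c \<in> C" for x c
  proof -
    let ?y = "addN (f x) c"
    obtain c' where c': "c' \<in> C" "?y = addN (f (g ?y)) c'" and gy: "g ?y \<in> CM"
      using g_spec[of ?y] x c by blast
    obtain p0 where p0: "\<And>p. fst p \<in> f ` CM \<and> snd p \<in> C \<and> ?y = addN (fst p) (snd p) \<Longrightarrow> p = p0"
      using decomp[OF closed[OF x c]] by blast
    have "(f x, c) = (f (g ?y), c')"
      using p0[of "(f x, c)"] p0[of "(f (g ?y), c')"] x c c' gy by auto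
    then show ?thesis
      using f_inj x gy unfolding inj_on_def by auto
  qed
  ultimately show ?thesis
    by blast
qed

lemma is_direct_summand_imp_retraction:
  assumes ds: "is_direct_summand CM addM actM CN addN actN Sc"
    and addM_closed: "\<And>x y. x \<in> CM \<Longrightarrow> y \<in> CM \<Longrightarrow> addM x y \<in> CM"
    and actM_closed: "\<And>x a. x \<in> CM \<Longrightarrow> a \<in> Sc \<Longrightarrow> actM x a \<in> CM"
    and addN_closed: "\<And>x y. x \<in> CN \<Longrightarrow> y \<in> CN \<Longrightarrow> addN x y \<in> CN"
    and interchange: "\<And>w x y z. w \<in> CN \<Longrightarrow> x \<in> CN \<Longrightarrow> y \<in> CN \<Longrightarrow> z \<in> CN \<Longrightarrow>
      addN (addN w y) (addN x z) = addN (addN w x) (addN y z)"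
    and distrib: "\<And>x y a. x \<in> CN \<Longrightarrow> y \<in> CN \<Longrightarrow> a \<in> Sc \<Longrightarrow>
      actN (addN x y) a = addN (actN x a) (actN y a)"
    and zero: "e \<in> Sc" "\<And>x. x \<in> CN \<Longrightarrow> actN x e = z" "\<And>x. x \<in> CN \<Longrightarrow> addN x z = x"
  shows "\<exists>f g. carrier_hom CM addM actM CN addN actN Sc f \<and> carrier_hom CN addN actN CM addM actM Sc g \<and>
    (\<forall>x\<in>CM. g (f x) = x)"
proof -
  obtain f C where f_in: "\<forall>x\<in>CM. f x \<in> CN" and f_inj: "inj_on f CM"
    and f_add: "\<forall>x\<in>CM. \<forall>y\<in>CM. f (addM x y) = addN (f x) (f y)"
    and f_act: "\<forall>x\<in>CM. \<forall>a\<in>Sc. f (actM x a) = actN (f x) a"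
    and C: "C \<subseteq> CN" "C \<noteq> {}" and C_add: "\<forall>x\<in>C. \<forall>y\<in>C. addN x y \<in> C"
    and C_act: "\<forall>x\<in>C. \<forall>a\<in>Sc. actN x a \<in> C"
    and decomp: "\<forall>n\<in>CN. \<exists>!p. fst p \<in> f ` CM \<and> snd p \<in> C \<and> n = addN (fst p) (snd p)"
    using ds unfolding is_direct_summand_def by (elim exE conjE) (rule that)
  have f: "carrier_hom CM addM actM CN addN actN Sc f"
    using f_in f_add f_act by (simp add: carrier_hom_def)
  have "addN (f x) c \<in> CN" if "x \<in> CM" "c \<in> C" for x c
    using that f_in C(1) addN_closed by blast
  then obtain g where g_in: "\<forall>y\<in>CN. g y \<in> CM \<and> (\<exists>c\<in>C. y = addN (f (g y)) c)"
    and g_eq: "\<forall>x\<in>CM. \<forall>c\<in>C. g (addN (f x) c) = x"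
    using ex_direct_sum_projection[OF f_inj bspec[OF decomp]] by blast
  have g_add: "g (addN y y') = addM (g y) (g y')" if y: "y \<in> CN" "y' \<in> CN" for y y'
  proof -
    obtain c c' where c: "c \<in> C" "y = addN (f (g y)) c" and c': "c' \<in> C" "y' = addN (f (g y')) c'"
      using g_in y by blast
    have "f (g y) \<in> CN" "f (g y') \<in> CN" "c \<in> CN" "c' \<in> CN"
      using y g_in f_in c(1) c'(1) C(1) by auto
    then have "addN (addN (f (g y)) c) (addN (f (g y')) c')
        = addN (addN (f (g y)) (f (g y'))) (addN c c')"
      by (rule interchange)
    then have "addN y y' = addN (addN (f (g y)) (f (g y'))) (addN c c')"
      by (simp only: c(2)[symmetric] c'(2)[symmetric])
    also have "\<dots> = addN (f (addM (g y) (g y'))) (addN c c')"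
      using y g_in f_add by simp
    finally show ?thesis
      using g_eq addM_closed g_in y C_add c c' by simp
  qed
  have g_act: "g (actN y a) = actM (g y) a" if y: "y \<in> CN" and a: "a \<in> Sc" for y a
  proof -
    obtain c where c: "c \<in> C" "y = addN (f (g y)) c"
      using g_in y by blast
    have "f (g y) \<in> CN" "c \<in> CN"
      using y g_in f_in c(1) C(1) by auto
    then have "actN (addN (f (g y)) c) a = addN (actN (f (g y)) a) (actN c a)"
      using a by (rule distrib)
    then have "actN y a = addN (actN (f (g y)) a) (actN c a)"
      by (simp only: c(2)[symmetric])
    also have "\<dots> = addN (f (actM (g y) a)) (actN c a)"
      using y a g_in f_act by simp
    finally show ?thesis
      using g_eq actM_closed g_in y a C_act c by simp
  qed
  have "carrier_hom CN addN actN CM addM actM Sc g"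
    using g_in g_add g_act by (simp add: carrier_hom_def)
  moreover have "g (f x) = x" if x: "x \<in> CM" for x
  proof -
    obtain c0 where "c0 \<in> C"
      using C(2) by blast
    then have "z \<in> C"
      using C_act zero(1) zero(2)[of c0] C(1) by auto
    then have "g (addN (f x) z) = x"
      using g_eq x by blast
    then show ?thesis
      using zero(3)[of "f x"] f_in x by simp
  qed
  ultimately show ?thesis
    using f by blast
qed

abbreviation loc_hom ::
  "('r::comm_ring_1 \<Rightarrow> 'a::ring_1) \<Rightarrow> 'r set \<Rightarrow> ('m::ab_group_add \<Rightarrow> 'a \<Rightarrow> 'm) \<Rightarrow>
   ('n::ab_group_add \<Rightarrow> 'a \<Rightarrow> 'n) \<Rightarrow> (('m \<times> 'r) set \<Rightarrow> ('n \<times> 'r) set) \<Rightarrow> bool"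
  where "loc_hom \<phi> S actM actN \<equiv> carrier_hom
    (loc (scalar_act \<phi> actM) S) (loc_add (scalar_act \<phi> actM) S) (loc_act (scalar_act \<phi> actM) S actM)
    (loc (scalar_act \<phi> actN) S) (loc_add (scalar_act \<phi> actN) S) (loc_act (scalar_act \<phi> actN) S actN)
    (loc (scalar_act \<phi> (*)) S)"

locale torsion_free_loc = alg_module \<phi> act
  for \<phi> :: "'r::idom \<Rightarrow> 'a::ring_1" and act :: "'m::ab_group_add \<Rightarrow> 'a \<Rightarrow> 'm" +
  fixes S :: "'r set"
  assumes torsion_free: "torsion_free (scalar_act \<phi> act)"
    and multiplicative: "multiplicative_set S"
begin

abbreviation "lfrac x s \<equiv> loc_class (scalar_act \<phi> act) S x s"
abbreviation "lfracA a t \<equiv> loc_class (scalar_act \<phi> (*)) S a t"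
abbreviation "LocM \<equiv> loc (scalar_act \<phi> act) S"
abbreviation "LocA \<equiv> loc (scalar_act \<phi> (*)) S"
abbreviation "ladd \<equiv> loc_add (scalar_act \<phi> act) S"
abbreviation "lact \<equiv> loc_act (scalar_act \<phi> act) S act"

lemma S_one: "1 \<in> S"
  and S_nonzero: "s \<in> S \<Longrightarrow> s \<noteq> 0"
  and S_mult: "s \<in> S \<Longrightarrow> t \<in> S \<Longrightarrow> s * t \<in> S"
  using multiplicative unfolding multiplicative_set_def by auto

lemma S_prod: "finite I \<Longrightarrow> (\<And>i. i \<in> I \<Longrightarrow> f i \<in> S) \<Longrightarrow> prod f I \<in> S"
  by (induction I rule: finite_induct) (auto simp: S_one S_mult)

lemma act_cancel: "s \<noteq> 0 \<Longrightarrow> act x (\<phi> s) = act y (\<phi> s) \<Longrightarrow> x = y"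
  using no_torsion[OF torsion_free, of s "x - y"] by (simp add: act_diff_left)

lemma loc_rel_iff:
  "((x, s), (y, t)) \<in> loc_rel (scalar_act \<phi> act) S \<longleftrightarrow> s \<in> S \<and> t \<in> S \<and> act x (\<phi> t) = act y (\<phi> s)"
proof -
  have "(\<exists>u\<in>S. act (act x (\<phi> t) - act y (\<phi> s)) (\<phi> u) = 0) \<longleftrightarrow> act x (\<phi> t) = act y (\<phi> s)"
  proof
    assume "\<exists>u\<in>S. act (act x (\<phi> t) - act y (\<phi> s)) (\<phi> u) = 0"
    then obtain u where "u \<in> S" "act (act x (\<phi> t) - act y (\<phi> s)) (\<phi> u) = 0"
      by blast
    then have "act x (\<phi> t) - act y (\<phi> s) = 0"
      using no_torsion[OF torsion_free] S_nonzero by blast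
    then show "act x (\<phi> t) = act y (\<phi> s)"
      by simp
  next
    assume "act x (\<phi> t) = act y (\<phi> s)"
    then show "\<exists>u\<in>S. act (act x (\<phi> t) - act y (\<phi> s)) (\<phi> u) = 0"
      using S_one by (intro bexI[of _ 1]) simp_all
  qed
  then show ?thesis
    unfolding loc_rel_def by auto
qed

lemma lfrac_mem_iff: "(y, t) \<in> lfrac x s \<longleftrightarrow> s \<in> S \<and> t \<in> S \<and> act x (\<phi> t) = act y (\<phi> s)"
  unfolding loc_class_def using loc_rel_iff by auto

lemma lfrac_eq_iff:
  assumes "s \<in> S" "t \<in> S"
  shows "lfrac x s = lfrac y t \<longleftrightarrow> act x (\<phi> t) = act y (\<phi> s)"
proof
  assume eq: "lfrac x s = lfrac y t"
  have "(y, t) \<in> lfrac y t"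
    using assms by (simp add: lfrac_mem_iff)
  then have "(y, t) \<in> lfrac x s"
    by (simp only: eq)
  then show "act x (\<phi> t) = act y (\<phi> s)"
    by (simp add: lfrac_mem_iff)
next
  assume xy: "act x (\<phi> t) = act y (\<phi> s)"
  have dir1: "act y (\<phi> v) = act z (\<phi> t)" if "act x (\<phi> v) = act z (\<phi> s)" for z v
  proof -
    have "act (act y (\<phi> v)) (\<phi> s) = act (act y (\<phi> s)) (\<phi> v)"
      by (simp add: mult.commute)
    also have "\<dots> = act (act x (\<phi> v)) (\<phi> t)"
      by (simp add: xy[symmetric] mult.commute)
    also have "\<dots> = act (act z (\<phi> t)) (\<phi> s)"
      by (simp add: that mult.commute)
    finally show ?thesis
      using act_cancel S_nonzero assms(1) by blast
  qed
  have dir2: "act x (\<phi> v) = act z (\<phi> s)" if "act y (\<phi> v) = act z (\<phi> t)" for z v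
  proof -
    have "act (act x (\<phi> v)) (\<phi> t) = act (act x (\<phi> t)) (\<phi> v)"
      by (simp add: mult.commute)
    also have "\<dots> = act (act y (\<phi> v)) (\<phi> s)"
      by (simp add: xy mult.commute)
    also have "\<dots> = act (act z (\<phi> s)) (\<phi> t)"
      by (simp add: that mult.commute)
    finally show ?thesis
      using act_cancel S_nonzero assms(2) by blast
  qed
  show "lfrac x s = lfrac y t"
  proof (rule Set.set_eqI)
    fix p :: "'m \<times> 'r"
    obtain z v where p: "p = (z, v)"
      by (cases p)
    show "p \<in> lfrac x s \<longleftrightarrow> p \<in> lfrac y t"
      unfolding p lfrac_mem_iff using assms dir1 dir2 by blast
  qed
qed

lemma lfrac_in_LocM: "s \<in> S \<Longrightarrow> lfrac x s \<in> LocM"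
  unfolding loc_def loc_class_def by (rule quotientI) auto

lemma LocM_cases:
  assumes "X \<in> LocM"
  obtains x s where "s \<in> S" "X = lfrac x s"
  using assms unfolding loc_def loc_class_def by (elim quotientE) auto

lemma lfracA_in_LocA: "t \<in> S \<Longrightarrow> lfracA a t \<in> LocA"
  unfolding loc_def loc_class_def by (rule quotientI) auto

lemma LocA_cases:
  assumes "A \<in> LocA"
  obtains a t where "t \<in> S" "A = lfracA a t"
  using assms unfolding loc_def loc_class_def by (elim quotientE) auto

lemma some_lfrac:
  assumes "s \<in> S"
  obtains x' s' where "(SOME p. p \<in> lfrac x s) = (x', s')" "s' \<in> S" "act x (\<phi> s') = act x' (\<phi> s)"
proof -
  have "(x, s) \<in> lfrac x s"
    using assms by (simp add: lfrac_mem_iff)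
  then have "(SOME p. p \<in> lfrac x s) \<in> lfrac x s"
    by (rule someI)
  then show ?thesis
    using that by (cases "SOME p. p \<in> lfrac x s") (auto simp: lfrac_mem_iff)
qed

lemma some_lfracA:
  assumes "t \<in> S"
  obtains a' t' u where "(SOME p. p \<in> lfracA a t) = (a', t')" "t' \<in> S" "u \<in> S"
    "a * \<phi> t' * \<phi> u = a' * \<phi> t * \<phi> u"
proof -
  have "(a, t) \<in> lfracA a t"
    using assms S_one unfolding loc_class_def loc_rel_def by force
  then have "(SOME p. p \<in> lfracA a t) \<in> lfracA a t"
    by (rule someI)
  then show ?thesis
    using that unfolding loc_class_def loc_rel_def
    by (cases "SOME p. p \<in> lfracA a t") (auto simp: left_diff_distrib)
qed

lemma ladd_lfrac:
  assumes s: "s \<in> S" and t: "t \<in> S"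
  shows "ladd (lfrac x s) (lfrac y t) = lfrac (act x (\<phi> t) + act y (\<phi> s)) (s * t)"
proof -
  obtain x' s' where x': "(SOME p. p \<in> lfrac x s) = (x', s')" "s' \<in> S" "act x (\<phi> s') = act x' (\<phi> s)"
    using some_lfrac[OF s] by blast
  obtain y' t' where y': "(SOME p. p \<in> lfrac y t) = (y', t')" "t' \<in> S" "act y (\<phi> t') = act y' (\<phi> t)"
    using some_lfrac[OF t] by blast
  have "act x' (\<phi> (t' * s * t)) = act (act x' (\<phi> s)) (\<phi> (t' * t))"
    by (simp add: ac_simps)
  also have "\<dots> = act x (\<phi> (t * s' * t'))"
    by (simp flip: x'(3) add: ac_simps)
  finally have x'_eq: "act x' (\<phi> (t' * s * t)) = act x (\<phi> (t * s' * t'))" .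
  have "act y' (\<phi> (s' * s * t)) = act (act y' (\<phi> t)) (\<phi> (s' * s))"
    by (simp add: ac_simps)
  also have "\<dots> = act y (\<phi> (s * s' * t'))"
    by (simp flip: y'(3) add: ac_simps)
  finally have y'_eq: "act y' (\<phi> (s' * s * t)) = act y (\<phi> (s * s' * t'))" .
  have "lfrac (act x' (\<phi> t') + act y' (\<phi> s')) (s' * t') = lfrac (act x (\<phi> t) + act y (\<phi> s)) (s * t)"
    using s t x'(2) y'(2) x'_eq y'_eq by (subst lfrac_eq_iff) (auto simp: S_mult sm_add_left ac_simps)
  then show ?thesis
    unfolding loc_add_def x'(1) y'(1) by simp
qed

lemma lact_lfrac:
  assumes s: "s \<in> S" and t: "t \<in> S"
  shows "lact (lfrac x s) (lfracA a t) = lfrac (act x a) (s * t)"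
proof -
  obtain x' s' where x': "(SOME p. p \<in> lfrac x s) = (x', s')" "s' \<in> S" "act x (\<phi> s') = act x' (\<phi> s)"
    using some_lfrac[OF s] by blast
  obtain a' t' u where a': "(SOME p. p \<in> lfracA a t) = (a', t')" "t' \<in> S" "u \<in> S"
    "a * \<phi> t' * \<phi> u = a' * \<phi> t * \<phi> u"
    using some_lfracA[OF t] by blast
  have "act (act x a) (\<phi> (s' * t' * u)) = act x (a * (\<phi> s' * (\<phi> t' * \<phi> u)))"
    by (simp only: act_mult phi_mult)
  also have "\<dots> = act x (\<phi> s' * (a * \<phi> t' * \<phi> u))"
    by (metis mult.assoc phi_central)
  also have "\<dots> = act (act x' (\<phi> s)) (a' * \<phi> t * \<phi> u)"
    unfolding a'(4) by (simp only: act_mult x'(3))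
  also have "\<dots> = act x' (a' * (\<phi> s * (\<phi> t * \<phi> u)))"
    by (metis act_mult mult.assoc phi_central)
  also have "\<dots> = act (act x' a') (\<phi> (s * t * u))"
    by (simp only: act_mult phi_mult)
  finally have "act (act (act x' a') (\<phi> (s * t))) (\<phi> u) = act (act (act x a) (\<phi> (s' * t'))) (\<phi> u)"
    by simp
  then have "lfrac (act x' a') (s' * t') = lfrac (act x a) (s * t)"
    using s t x'(2) a'(2,3) act_cancel[OF S_nonzero[OF a'(3)]]
    by (subst lfrac_eq_iff) (auto simp: S_mult)
  then show ?thesis
    unfolding loc_act_def x'(1) a'(1) by simp
qed

lemma ladd_closed: "X \<in> LocM \<Longrightarrow> Y \<in> LocM \<Longrightarrow> ladd X Y \<in> LocM"
  by (elim LocM_cases) (simp add: ladd_lfrac lfrac_in_LocM S_mult)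

lemma lact_closed: "X \<in> LocM \<Longrightarrow> A \<in> LocA \<Longrightarrow> lact X A \<in> LocM"
  by (elim LocM_cases LocA_cases) (simp add: lact_lfrac lfrac_in_LocM S_mult)

lemma ladd_interchange:
  assumes "P \<in> LocM" "Q \<in> LocM" "U \<in> LocM" "V \<in> LocM"
  shows "ladd (ladd P U) (ladd Q V) = ladd (ladd P Q) (ladd U V)"
  using assms by (elim LocM_cases) (simp add: ladd_lfrac S_mult sm_add_left ac_simps)

lemma ladd_zero: "X \<in> LocM \<Longrightarrow> ladd X (lfrac 0 1) = X"
  by (elim LocM_cases) (simp add: ladd_lfrac S_one)

lemma lact_zero: "X \<in> LocM \<Longrightarrow> lact X (lfracA 0 1) = lfrac 0 1"
  by (elim LocM_cases) (simp add: lact_lfrac lfrac_eq_iff S_one)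

lemma lact_distrib:
  assumes "X \<in> LocM" "Y \<in> LocM" "A \<in> LocA"
  shows "lact (ladd X Y) A = ladd (lact X A) (lact Y A)"
proof -
  have distrib: "act (act x (\<phi> t) + act y (\<phi> s)) a = act (act x a) (\<phi> t) + act (act y a) (\<phi> s)"
    for x y a s t
    by (simp only: act_add_left act_scalar_commute)
  show ?thesis
    using assms
    by (elim LocM_cases LocA_cases)
      (simp add: ladd_lfrac lact_lfrac S_mult lfrac_eq_iff distrib sm_add_left ac_simps)
qed

lemma lfrac_inj: "s \<in> S \<Longrightarrow> lfrac x s = lfrac y s \<Longrightarrow> x = y"
  using act_cancel S_nonzero by (simp add: lfrac_eq_iff) blast

lemma ladd_lfrac_same: "s \<in> S \<Longrightarrow> ladd (lfrac x s) (lfrac y s) = lfrac (x + y) s"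
  by (simp add: ladd_lfrac lfrac_eq_iff S_mult sm_add_left ac_simps)

end

lemma (in torsion_free_loc) ex_common_denominator:
  assumes X: "alg_module \<phi> actX" and fg: "fg_right_module actX" and F_in: "\<And>x. F x \<in> LocM"
    and F_add: "\<And>x x'. F (x + x') = ladd (F x) (F x')"
    and F_act: "\<And>x a. F (actX x a) = lact (F x) (lfracA a 1)"
  shows "\<exists>\<sigma>\<in>S. \<forall>x. \<exists>y. F x = lfrac y \<sigma>"
proof -
  obtain G where G: "finite G" "\<And>x. \<exists>c. x = (\<Sum>g\<in>G. actX g (c g))"
    using fg unfolding fg_right_module_def by blast
  have "\<exists>y s. s \<in> S \<and> F g = lfrac y s" for g
    using F_in[of g] by (elim LocM_cases) blast
  then obtain y_gen s_gen where s_gen: "\<And>g. s_gen g \<in> S"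
    and F_gen: "\<And>g. F g = lfrac (y_gen g) (s_gen g)"
    by metis
  define \<sigma> where "\<sigma> = prod s_gen G"
  have \<sigma>: "\<sigma> \<in> S"
    unfolding \<sigma>_def using G(1) s_gen by (rule S_prod)
  have F_gen_act: "\<exists>y. F (actX g a) = lfrac y \<sigma>" if g: "g \<in> G" for g a
  proof -
    have \<sigma>_eq: "\<sigma> = s_gen g * prod s_gen (G - {g})"
      unfolding \<sigma>_def using G(1) g by (simp add: prod.remove)
    have "F (actX g a) = lact (F g) (lfracA a 1)"
      by (rule F_act)
    also have "\<dots> = lfrac (act (y_gen g) a) (s_gen g)"
      using lact_lfrac[OF s_gen S_one] by (simp add: F_gen)
    also have "\<dots> = lfrac (act (act (y_gen g) a) (\<phi> (prod s_gen (G - {g})))) \<sigma>"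
      using s_gen[of g] \<sigma> by (subst lfrac_eq_iff) (simp_all add: \<sigma>_eq ac_simps)
    finally show ?thesis
      by blast
  qed
  have F_zero: "F 0 = lfrac 0 \<sigma>"
  proof -
    have "F 0 = lact (F 0) (lfracA 0 1)"
      using F_act[of 0 0] by (simp add: alg_module.act_zero_left[OF X])
    also have "\<dots> = lfrac 0 1"
      using F_in by (rule lact_zero)
    also have "\<dots> = lfrac 0 \<sigma>"
      using \<sigma> S_one by (simp add: lfrac_eq_iff)
    finally show ?thesis .
  qed
  have "\<exists>y. F x = lfrac y \<sigma>" for x
  proof -
    obtain c where c: "x = (\<Sum>g\<in>G. actX g (c g))"
      using G(2) by blast
    have "\<exists>y. F (\<Sum>g\<in>H. actX g (c g)) = lfrac y \<sigma>" if "H \<subseteq> G" for H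
      using finite_subset[OF that G(1)] that
    proof (induction H rule: finite_induct)
      case empty
      then show ?case
        using F_zero by auto
    next
      case (insert g H)
      then obtain y y' where "F (actX g (c g)) = lfrac y \<sigma>" "F (\<Sum>g\<in>H. actX g (c g)) = lfrac y' \<sigma>"
        using F_gen_act by blast
      then show ?case
        using insert.hyps by (auto simp: F_add ladd_lfrac_same[OF \<sigma>])
    qed
    then show ?thesis
      unfolding c by blast
  qed
  then show ?thesis
    using \<sigma> by blast
qed

lemma loc_hom_clear_denominators:
  assumes M: "torsion_free_loc \<phi> actM S" and N: "torsion_free_loc \<phi> actN S"
    and fg: "fg_right_module actM" and f: "loc_hom \<phi> S actM actN f"
  obtains \<sigma> \<gamma> where "\<sigma> \<in> S" and "right_module_hom actM actN \<gamma>"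
    and "\<And>x. f (loc_class (scalar_act \<phi> actM) S x 1) = loc_class (scalar_act \<phi> actN) S (\<gamma> x) \<sigma>"
proof -
  interpret M: torsion_free_loc \<phi> actM S by (rule M)
  interpret N: torsion_free_loc \<phi> actN S by (rule N)
  define F where "F x = f (M.lfrac x 1)" for x
  have F_in: "F x \<in> N.LocM" for x
    using f M.lfrac_in_LocM[OF M.S_one] unfolding F_def carrier_hom_def by blast
  have F_add: "F (x + x') = N.ladd (F x) (F x')" for x x'
  proof -
    have "M.lfrac (x + x') 1 = M.ladd (M.lfrac x 1) (M.lfrac x' 1)"
      by (simp add: M.ladd_lfrac_same M.S_one)
    then show ?thesis
      using f M.lfrac_in_LocM[OF M.S_one] unfolding F_def carrier_hom_def by simp
  qed
  have F_act: "F (actM x a) = N.lact (F x) (N.lfracA a 1)" for x a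
  proof -
    have "M.lfrac (actM x a) 1 = M.lact (M.lfrac x 1) (M.lfracA a 1)"
      by (simp add: M.lact_lfrac M.S_one)
    then show ?thesis
      using f M.lfrac_in_LocM[OF M.S_one] M.lfracA_in_LocA[OF M.S_one] unfolding F_def carrier_hom_def
      by simp
  qed
  obtain \<sigma> where \<sigma>: "\<sigma> \<in> S" and common: "\<And>x. \<exists>y. F x = N.lfrac y \<sigma>"
    using N.ex_common_denominator[OF M.alg_module_axioms fg F_in F_add F_act] by blast
  define \<gamma> where "\<gamma> x = (SOME y. F x = N.lfrac y \<sigma>)" for x
  have F_\<gamma>: "F x = N.lfrac (\<gamma> x) \<sigma>" for x
    unfolding \<gamma>_def using common by (rule someI_ex)
  have "\<gamma> (x + x') = \<gamma> x + \<gamma> x'" for x x'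
    using F_add[of x x'] \<sigma> by (intro N.lfrac_inj[OF \<sigma>]) (simp add: F_\<gamma> N.ladd_lfrac_same)
  moreover have "\<gamma> (actM x a) = actN (\<gamma> x) a" for x a
    using F_act[of x a] \<sigma> by (intro N.lfrac_inj[OF \<sigma>]) (simp add: F_\<gamma> N.lact_lfrac N.S_one)
  ultimately have "right_module_hom actM actN \<gamma>"
    by (simp add: right_module_hom_def)
  then show ?thesis
    using that \<sigma> F_\<gamma> unfolding F_def by blast
qed

lemma loc_direct_summand_imp_mult_factors_through:
  assumes M: "alg_module \<phi> actM" and N: "alg_module \<phi> actN"
    and tf: "torsion_free (scalar_act \<phi> actM)" "torsion_free (scalar_act \<phi> actN)"
    and fg: "fg_right_module actM" "fg_right_module actN"
    and S: "multiplicative_set S" and ds: "loc_direct_summand \<phi> S actM actN"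
  shows "\<exists>u\<in>S. mult_factors_through \<phi> actM actN u"
proof -
  have M_loc: "torsion_free_loc \<phi> actM S" and N_loc: "torsion_free_loc \<phi> actN S"
    using M N tf S by (simp_all add: torsion_free_loc_def torsion_free_loc_axioms_def)
  interpret M: torsion_free_loc \<phi> actM S by (rule M_loc)
  interpret N: torsion_free_loc \<phi> actN S by (rule N_loc)
  have ds': "is_direct_summand M.LocM M.ladd M.lact N.LocM N.ladd N.lact M.LocA"
    using ds unfolding loc_direct_summand_def Let_def .
  have "\<exists>f g. loc_hom \<phi> S actM actN f \<and> loc_hom \<phi> S actN actM g \<and> (\<forall>X\<in>M.LocM. g (f X) = X)"
    by (rule is_direct_summand_imp_retraction[OF ds' M.ladd_closed M.lact_closed N.ladd_closed
          N.ladd_interchange N.lact_distrib N.lfracA_in_LocA[OF N.S_one] N.lact_zero N.ladd_zero])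
  then obtain f g where f: "loc_hom \<phi> S actM actN f" and g: "loc_hom \<phi> S actN actM g"
    and gf: "\<forall>X\<in>M.LocM. g (f X) = X"
    by blast
  obtain \<sigma> \<gamma> where \<sigma>: "\<sigma> \<in> S" and \<gamma>: "right_module_hom actM actN \<gamma>"
    and f_\<gamma>: "\<And>x. f (M.lfrac x 1) = N.lfrac (\<gamma> x) \<sigma>"
    by (rule loc_hom_clear_denominators[OF M_loc N_loc fg(1) f]) (rule that)
  obtain \<tau> \<delta> where \<tau>: "\<tau> \<in> S" and \<delta>: "right_module_hom actN actM \<delta>"
    and g_\<delta>: "\<And>y. g (N.lfrac y 1) = M.lfrac (\<delta> y) \<tau>"
    by (rule loc_hom_clear_denominators[OF N_loc M_loc fg(2) g]) (rule that)
  have "\<delta> (\<gamma> x) = actM x (\<phi> (\<sigma> * \<tau>))" for x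
  proof -
    have \<gamma>x: "N.lfrac (\<gamma> x) 1 = N.lact (f (M.lfrac x 1)) (N.lfracA (\<phi> \<sigma>) 1)"
      using \<sigma> by (simp add: f_\<gamma> N.lact_lfrac N.S_one N.lfrac_eq_iff)
    have "M.lfrac (\<delta> (\<gamma> x)) \<tau> = g (N.lact (f (M.lfrac x 1)) (N.lfracA (\<phi> \<sigma>) 1))"
      by (simp only: g_\<delta>[symmetric] \<gamma>x)
    also have "\<dots> = M.lact (g (f (M.lfrac x 1))) (N.lfracA (\<phi> \<sigma>) 1)"
      using f g M.lfrac_in_LocM[OF M.S_one] N.lfracA_in_LocA[OF N.S_one] unfolding carrier_hom_def
      by simp
    also have "\<dots> = M.lfrac (actM x (\<phi> \<sigma>)) 1"
      using gf M.lfrac_in_LocM[OF M.S_one] by (simp add: M.lact_lfrac M.S_one)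
    finally show ?thesis
      using \<tau> M.S_one by (simp add: M.lfrac_eq_iff mult.commute)
  qed
  then have "mult_factors_through \<phi> actM actN (\<sigma> * \<tau>)"
    unfolding mult_factors_through_def using \<gamma> \<delta> by blast
  then show ?thesis
    using \<sigma> \<tau> M.S_mult by blast
qed

theorem mainTheorem18:
  fixes \<phi> :: "'r::idom \<Rightarrow> 'a::ring_1"
    and actM :: "'m::ab_group_add \<Rightarrow> 'a \<Rightarrow> 'm"
    and actN :: "'n::ab_group_add \<Rightarrow> 'a \<Rightarrow> 'n"
    and actK :: "'k::ab_group_add \<Rightarrow> 'a \<Rightarrow> 'k"
  assumes "finite_character TYPE('r)"
    and "is_algebra_map \<phi>" and "fg_over_base \<phi>"
    and "right_module actM" and "right_module actN" and "right_module actK"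
    and "fg_right_module actM" and "fg_right_module actN" and "fg_right_module actK"
    and "torsion_free (\<lambda>x r. actM x (\<phi> r))"
    and "torsion_free (\<lambda>x r. actN x (\<phi> r))"
    and "torsion_free (\<lambda>x r. actK x (\<phi> r))"
    and "\<And>m. max_ideal m \<Longrightarrow> loc_direct_summand \<phi> (UNIV - m) actM actN"
    and "loc_direct_summand \<phi> nonzeros actM actK"
  shows "is_direct_summand UNIV (+) actM UNIV
           (\<lambda>(y, z) (y', z'). (y + y', z + z'))
           (\<lambda>(y, z) a. (actN y a, actK z a)) UNIV"
proof -
  have M: "alg_module \<phi> actM" and N: "alg_module \<phi> actN" and K: "alg_module \<phi> actK"
    using assms(2,4-6) by (simp_all add: alg_module_def)
  have "\<exists>t\<in>nonzeros. mult_factors_through \<phi> actM actK t"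
    by (rule loc_direct_summand_imp_mult_factors_through[OF M K assms(10,12,7,9)
        multiplicative_set_nonzeros assms(14)])
  then obtain t where t: "t \<noteq> 0" and tK: "mult_factors_through \<phi> actM actK t"
    by auto
  define T where "T = {m. max_ideal m \<and> t \<in> m}"
  have T_finite: "finite T"
    using assms(1) t by (simp add: finite_character_def T_def)
  have T_max: "\<And>m. m \<in> T \<Longrightarrow> max_ideal m"
    by (simp add: T_def)
  have "\<exists>u\<in>UNIV - m. mult_factors_through \<phi> actM actN u" if "m \<in> T" for m
    by (rule loc_direct_summand_imp_mult_factors_through[OF M N assms(10,11,7,8)
        multiplicative_set_compl_prime_ideal[OF max_ideal_imp_prime_ideal[OF T_max[OF that]]]
        assms(13)[OF T_max[OF that]]])
  then have "\<exists>u. u \<notin> m \<and> mult_factors_through \<phi> actM actN u" if "m \<in> T" for m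
    using that by blast
  then obtain a where a: "\<forall>m\<in>T. a \<notin> m" and aN: "mult_factors_through \<phi> actM actN a"
    using mult_factors_through_glue[OF M N assms(3,7) T_finite T_max] by blast
  have "\<And>m. max_ideal m \<Longrightarrow> t \<in> m \<Longrightarrow> a \<notin> m"
    using a by (simp add: T_def)
  then obtain a' t' where comb: "a' * a + t' * t = 1"
    using comaximal_if_no_common_max_ideal by blast
  have "mult_factors_through \<phi> actM (\<lambda>(y, z) c. (actN y c, actK z c)) (a' * a + t' * t)"
    using mult_factors_through_mult[OF M N aN] mult_factors_through_mult[OF M K tK]
    by (rule mult_factors_through_prod[OF M])
  then have one: "mult_factors_through \<phi> actM (\<lambda>(y, z) c. (actN y c, actK z c)) 1"
    by (simp only: comb)
  have pair_add: "(\<lambda>(y, z) (y', z'). (y + y', z + z')) = ((+) :: 'n \<times> 'k \<Rightarrow> _)"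
    by (intro ext) (simp add: split_def prod_eq_iff)
  show ?thesis
    unfolding pair_add by (rule mult_factors_through_one_imp_is_direct_summand[OF M one])
qed

end
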